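(* Let $G=(V,E)$ be a finite, connected, bipartite cubic graph and $n>0$. For every $A\in\mathcal F(G)$ and every pair $x,y\in V$, the states $(A,x,x)$ and $(A,y,y)$ of $\mathcal R(G)$ intercommunicate under $P_{G,n}$: the chain started at $(A,x,x)$ reaches $(A,y,y)$ with positive probability, and vice versa.
   Context: $\mathcal F(G)=\{A\subseteq E: d_w(A)=2\text{ for all }w\in V\}$ (the 2-factors of $G$). Let $G=(V,E)$ be a finite, connected, bipartite cubic (3-regular) graph and $n>0$. For $A\subseteq E$ and $w\in V$ let $d_w(A)$ be the number of edges of $A$ incident to $w$, and let $\partial A$ be the set of vertices $w$ with $d_w(A)$ odd. Let $\mathcal R(G)$ be the set of ordered triples $(A,u,v)$ with $A\subseteq E$, $u,v\in V$, such that $\partial A=\{u,v\}$ if $u\ne v$ and $\partial A=\emptyset$ if $u=v$, $d_w(A)\ge1$ for all $w\in V$, and $d_u(A)+d_v(A)\ge4$. For $(A,u,v)\in\mathcal R(G)$ let $C_{uv}(A)$ be the connected component of $(V,A)$ containing $u$ (and $v$). Partition $\mathcal R(G)$ into: $\mathcal E$, the states where $C_{uv}(A)$ is a cycle (equivalently $u=v$); $\mathcal T$, where $C_{uv}(A)$ is a tadpole graph (a cycle with a path attached at one of its endpoints; equivalently $\{d_u(A),d_v(A)\}=\{1,3\}$); $\Theta$, where $C_{uv}(A)$ is a theta graph (two degree-3 vertices joined by three internally vertex-disjoint paths); $\mathcal D$, where $C_{uv}(A)$ is a dumbbell graph (two vertex-disjoint cycles joined by a path of length $\ge1$). An edge of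 $A$ is a bridge if deleting it from $(V,A)$ increases the number of connected components. $\triangle$ denotes symmetric difference. The Markov chain $P_{G,n}$ on $\mathcal R(G)$ is defined as follows: from the state $(A,u,v)$, for each edge $e=uu'\in E$ incident to $u$ it moves to $(A\triangle e,u',v)$, and for each edge $e=vv'\in E$ incident to $v$ it moves to $(A\triangle e,u,v')$, where such a move (along edge $e$ incident to the moved defect) has probability $1/2$ if $(A,u,v)\in\mathcal E\cup\mathcal T$ and $e\notin A$; $1/6$ if $(A,u,v)\in\Theta$; $n/(2(n+2))$ if $(A,u,v)\in\mathcal D$ and $e$ is a bridge of $(V,A)$; $1/(2(n+2))$ if $(A,u,v)\in\mathcal D$ and $e\in A$ is not a bridge; and $0$ otherwise. (If $u=v$, the two moves along the unique edge $e\notin A$ at $u$ lead to the distinct states $(A\cup e,u',u)$ and $(A\cup e,u,u')$.) All other transitions, including all identity transitions, have probability $0$. *)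

theory Defs
  imports Complex_Main
begin

type_synonym 'a state = "'a set set \<times> 'a \<times> 'a"

definition simple_graph :: "'a set \<Rightarrow> 'a set set \<Rightarrow> bool" where
  "simple_graph V E \<longleftrightarrow> (\<forall>e\<in>E. \<exists>x y. x \<in> V \<and> y \<in> V \<and> x \<noteq> y \<and> e = {x, y})"

definition deg :: "'a set set \<Rightarrow> 'a \<Rightarrow> nat" where
  "deg A w = card {e \<in> A. w \<in> e}"

definition adj :: "'a set set \<Rightarrow> ('a \<times> 'a) set" where
  "adj A = {(x, y). {x, y} \<in> A}"

definition cubic :: "'a set \<Rightarrow> 'a set set \<Rightarrow> bool" where
  "cubic V E \<longleftrightarrow> (\<forall>w\<in>V. deg E w = 3)"

definition connected_graph :: "'a set \<Rightarrow> 'a set set \<Rightarrow> bool" where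
  "connected_graph V E \<longleftrightarrow> (\<forall>x\<in>V. \<forall>y\<in>V. (x, y) \<in> (adj E)\<^sup>*)"

definition bipartite :: "'a set \<Rightarrow> 'a set set \<Rightarrow> bool" where
  "bipartite V E \<longleftrightarrow> (\<exists>X \<subseteq> V. \<forall>e\<in>E. card (e \<inter> X) = 1)"

definition bdry :: "'a set \<Rightarrow> 'a set set \<Rightarrow> 'a set" where
  "bdry V A = {w \<in> V. odd (deg A w)}"

definition two_factors :: "'a set \<Rightarrow> 'a set set \<Rightarrow> 'a set set set" where
  "two_factors V E = {A. A \<subseteq> E \<and> (\<forall>w\<in>V. deg A w = 2)}"

definition states :: "'a set \<Rightarrow> 'a set set \<Rightarrow> 'a state set" where
  "states V E = {(A, u, v). A \<subseteq> E \<and> u \<in> V \<and> v \<in> V \<and>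
      bdry V A = (if u \<noteq> v then {u, v} else {}) \<and>
      (\<forall>w\<in>V. deg A w \<ge> 1) \<and> deg A u + deg A v \<ge> 4}"

definition reach :: "'a set set \<Rightarrow> 'a \<Rightarrow> 'a set" where
  "reach A x = {y. (x, y) \<in> (adj A)\<^sup>*}"

definition components :: "'a set \<Rightarrow> 'a set set \<Rightarrow> 'a set set" where
  "components V A = reach A ` V"

definition comp_verts :: "'a set set \<Rightarrow> 'a \<Rightarrow> 'a set" where
  "comp_verts A u = reach A u"

definition comp_edges :: "'a set set \<Rightarrow> 'a \<Rightarrow> 'a set set" where
  "comp_edges A u = {e \<in> A. e \<subseteq> reach A u}"

definition is_bridge :: "'a set \<Rightarrow> 'a set set \<Rightarrow> 'a set \<Rightarrow> bool" where
  "is_bridge V A e \<longleftrightarrow> e \<in> A \<and> card (components V (A - {e})) > card (components V A)"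

definition path_edges :: "'a list \<Rightarrow> 'a set set" where
  "path_edges p = {{p ! i, p ! Suc i} | i. Suc i < length p}"

definition is_path :: "'a list \<Rightarrow> bool" where
  "is_path p \<longleftrightarrow> distinct p \<and> length p \<ge> 2"

definition interior :: "'a list \<Rightarrow> 'a set" where
  "interior p = set (butlast (tl p))"

definition cycle_edges :: "'a list \<Rightarrow> 'a set set" where
  "cycle_edges c = {{c ! i, c ! ((Suc i) mod length c)} | i. i < length c}"

definition is_cycle :: "'a list \<Rightarrow> bool" where
  "is_cycle c \<longleftrightarrow> distinct c \<and> length c \<ge> 3"

definition cycle_graph :: "'a set \<Rightarrow> 'a set set \<Rightarrow> bool" where
  "cycle_graph Vc Ec \<longleftrightarrow> (\<exists>c. is_cycle c \<and> Vc = set c \<and> Ec = cycle_edges c)"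

definition tadpole_graph :: "'a set \<Rightarrow> 'a set set \<Rightarrow> bool" where
  "tadpole_graph Vc Ec \<longleftrightarrow> (\<exists>c p. is_cycle c \<and> is_path p \<and>
      set p \<inter> set c = {hd p} \<and>
      Vc = set c \<union> set p \<and> Ec = cycle_edges c \<union> path_edges p)"

definition theta_graph :: "'a set \<Rightarrow> 'a set set \<Rightarrow> bool" where
  "theta_graph Vc Ec \<longleftrightarrow> (\<exists>a b p1 p2 p3. a \<noteq> b \<and>
      is_path p1 \<and> is_path p2 \<and> is_path p3 \<and>
      hd p1 = a \<and> hd p2 = a \<and> hd p3 = a \<and> last p1 = b \<and> last p2 = b \<and> last p3 = b \<and>
      p1 \<noteq> p2 \<and> p1 \<noteq> p3 \<and> p2 \<noteq> p3 \<and>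
      interior p1 \<inter> set p2 = {} \<and> interior p1 \<inter> set p3 = {} \<and>
      interior p2 \<inter> set p1 = {} \<and> interior p2 \<inter> set p3 = {} \<and>
      interior p3 \<inter> set p1 = {} \<and> interior p3 \<inter> set p2 = {} \<and>
      Vc = set p1 \<union> set p2 \<union> set p3 \<and>
      Ec = path_edges p1 \<union> path_edges p2 \<union> path_edges p3)"

definition dumbbell_graph :: "'a set \<Rightarrow> 'a set set \<Rightarrow> bool" where
  "dumbbell_graph Vc Ec \<longleftrightarrow> (\<exists>c1 c2 p. is_cycle c1 \<and> is_cycle c2 \<and> is_path p \<and>
      set c1 \<inter> set c2 = {} \<and> hd p \<in> set c1 \<and> last p \<in> set c2 \<and>
      interior p \<inter> (set c1 \<union> set c2) = {} \<and>
      Vc = set c1 \<union> set c2 \<union> set p \<and>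
      Ec = cycle_edges c1 \<union> cycle_edges c2 \<union> path_edges p)"

definition cls_E :: "'a set \<Rightarrow> 'a set set \<Rightarrow> 'a state set" where
  "cls_E V E = {(A, u, v) \<in> states V E. cycle_graph (comp_verts A u) (comp_edges A u)}"

definition cls_T :: "'a set \<Rightarrow> 'a set set \<Rightarrow> 'a state set" where
  "cls_T V E = {(A, u, v) \<in> states V E. tadpole_graph (comp_verts A u) (comp_edges A u)}"

definition cls_Theta :: "'a set \<Rightarrow> 'a set set \<Rightarrow> 'a state set" where
  "cls_Theta V E = {(A, u, v) \<in> states V E. theta_graph (comp_verts A u) (comp_edges A u)}"

definition cls_D :: "'a set \<Rightarrow> 'a set set \<Rightarrow> 'a state set" where
  "cls_D V E = {(A, u, v) \<in> states V E. dumbbell_graph (comp_verts A u) (comp_edges A u)}"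

definition move_weight :: "'a set \<Rightarrow> 'a set set \<Rightarrow> real \<Rightarrow> 'a state \<Rightarrow> 'a set \<Rightarrow> real" where
  "move_weight V E n s e =
     (case s of (A, u, v) \<Rightarrow>
       if s \<in> cls_E V E \<union> cls_T V E then (if e \<notin> A then 1/2 else 0)
       else if s \<in> cls_Theta V E then 1/6
       else if s \<in> cls_D V E then
         (if is_bridge V A e then n / (2 * (n + 2))
          else if e \<in> A then 1 / (2 * (n + 2)) else 0)
       else 0)"

definition P_chain :: "'a set \<Rightarrow> 'a set set \<Rightarrow> real \<Rightarrow> 'a state \<Rightarrow> 'a state \<Rightarrow> real" where
  "P_chain V E n s t =
     (case s of (A, u, v) \<Rightarrow>
        (\<Sum>u' \<in> {u' \<in> V. {u, u'} \<in> E}.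
            if t = ((A - {{u, u'}}) \<union> ({{u, u'}} - A), u', v) then move_weight V E n s {u, u'} else 0)
      + (\<Sum>v' \<in> {v' \<in> V. {v, v'} \<in> E}.
            if t = ((A - {{v, v'}}) \<union> ({{v, v'}} - A), u, v') then move_weight V E n s {v, v'} else 0))"

definition reaches :: "'a set \<Rightarrow> 'a set set \<Rightarrow> real \<Rightarrow> 'a state \<Rightarrow> 'a state \<Rightarrow> bool" where
  "reaches V E n s t \<longleftrightarrow> (\<lambda>a b. P_chain V E n a b > 0)\<^sup>*\<^sup>* s t"

end

theory Submission
  imports Defs
begin

(* Let A be a 2-factor of the cubic graph G.  At every vertex there are two A-edges and exactly
   one non-A edge, and every component of (V, A) is a cycle.  Since G is connected it suffices
   to show that (A, x, x) reaches (A, z, z) for every edge {x, z} of G: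
   - if {x, z} is not in A, add it (allowed in the cycle state (A, x, x)); the resulting state
     is a theta (chord of the cycle of x) or a dumbbell (edge to another cycle), from which the
     other defect walks back over {x, z} by removing it;
   - if {x, z} = {x, y} is in A, let x', y' be the non-A neighbours of x, y and make six
     moves: add xx', remove xy, add yy', remove x'x, add xy, remove y'y.  The intermediate states
     are alternately tadpoles (where adding non-A edges is allowed) and thetas or dumbbells
     (where removing edges of the current set is allowed); the double-swap state is analysed
     by the position of x', y' relative to the cycle through x and y. *)

section \<open>Vertex lists as paths and cycles\<close>

lemma path_edges_Nil [simp]: "path_edges [] = {}"
  by (auto simp: path_edges_def)

lemma path_edges_single [simp]: "path_edges [a] = {}"
  by (auto simp: path_edges_def)

lemma path_edges_Cons_Cons [simp]:
  "path_edges (a # b # xs) = insert {a, b} (path_edges (b # xs))"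
proof (rule set_eqI)
  fix e
  show "e \<in> path_edges (a # b # xs) \<longleftrightarrow> e \<in> insert {a, b} (path_edges (b # xs))"
  proof
    assume "e \<in> path_edges (a # b # xs)"
    then obtain i where i: "e = {(a # b # xs) ! i, (a # b # xs) ! Suc i}" "Suc i < length (a # b # xs)"
      unfolding path_edges_def by blast
    then show "e \<in> insert {a, b} (path_edges (b # xs))"
      by (cases i) (auto simp: path_edges_def)
  next
    assume "e \<in> insert {a, b} (path_edges (b # xs))"
    then show "e \<in> path_edges (a # b # xs)"
    proof
      assume "e = {a, b}"
      then show ?thesis unfolding path_edges_def by (auto intro!: exI[of _ 0])
    next
      assume "e \<in> path_edges (b # xs)"
      then obtain j where "e = {(b # xs) ! j, (b # xs) ! Suc j}" "Suc j < length (b # xs)"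
        unfolding path_edges_def by blast
      then show ?thesis unfolding path_edges_def by (auto intro!: exI[of _ "Suc j"])
    qed
  qed
qed

lemma path_edges_Cons: "ys \<noteq> [] \<Longrightarrow> path_edges (a # ys) = insert {a, hd ys} (path_edges ys)"
  by (cases ys) auto

lemma path_edges_append: "path_edges (xs @ a # ys) = path_edges (xs @ [a]) \<union> path_edges (a # ys)"
proof (induction xs)
  case (Cons x xs)
  then show ?case by (cases xs) auto
qed simp

lemma path_edges_snoc:
  assumes "p \<noteq> []" shows "path_edges (p @ [x]) = insert {last p, x} (path_edges p)"
proof -
  have "p @ [x] = butlast p @ last p # [x]" using assms by simp
  also have "path_edges \<dots> = path_edges p \<union> path_edges [last p, x]"
    using path_edges_append[of "butlast p" "last p" "[x]"] assms by simp
  finally show ?thesis by simp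
qed

lemma path_edges_rev [simp]: "path_edges (rev xs) = path_edges xs"
proof (induction xs)
  case (Cons x xs)
  show ?case
  proof (cases xs)
    case (Cons y ys)
    then show ?thesis
      using Cons.IH path_edges_snoc[of "rev xs" x] by (auto simp: insert_commute)
  qed simp
qed simp

lemma path_edges_nth: "Suc i < length p \<Longrightarrow> {p ! i, p ! Suc i} \<in> path_edges p"
  unfolding path_edges_def by blast

lemma cycle_edges_path_edges:
  assumes "2 \<le> length c"
  shows "cycle_edges c = insert {last c, hd c} (path_edges c)"
proof (rule set_eqI)
  fix e
  have "c \<noteq> []" using assms by auto
  then have ends: "last c = c ! (length c - 1)" "hd c = c ! 0"
    by (simp_all add: last_conv_nth hd_conv_nth)
  have "Suc (length c - 1) = length c" using assms by simp
  then have wrap: "Suc (length c - 1) mod length c = 0" "length c - 1 < length c" by simp_all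
  show "e \<in> cycle_edges c \<longleftrightarrow> e \<in> insert {last c, hd c} (path_edges c)"
  proof
    assume "e \<in> cycle_edges c"
    then obtain i where i: "e = {c ! i, c ! (Suc i mod length c)}" "i < length c"
      unfolding cycle_edges_def by blast
    show "e \<in> insert {last c, hd c} (path_edges c)"
    proof (cases "Suc i < length c")
      case True
      then show ?thesis using i unfolding path_edges_def by auto
    next
      case False
      then have "Suc i = length c" using i by simp
      then have "i = length c - 1" "Suc i mod length c = 0" by auto
      then show ?thesis using i ends by auto
    qed
  next
    assume "e \<in> insert {last c, hd c} (path_edges c)"
    then show "e \<in> cycle_edges c"
    proof
      assume "e = {last c, hd c}"
      then show ?thesis
        using ends wrap unfolding cycle_edges_def by (auto intro!: exI[of _ "length c - 1"])
    next
      assume "e \<in> path_edges c"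
      then obtain i where "e = {c ! i, c ! Suc i}" "Suc i < length c"
        unfolding path_edges_def by blast
      then show ?thesis unfolding cycle_edges_def by (auto intro!: exI[of _ i])
    qed
  qed
qed

lemma cycle_edges_split:
  "cycle_edges (a # xs @ b # ys) = path_edges (a # xs @ [b]) \<union> path_edges (b # ys @ [a])"
proof -
  let ?c = "a # xs @ b # ys"
  have "cycle_edges ?c = insert {last (b # ys), a} (path_edges ?c)"
    using cycle_edges_path_edges[of ?c] by simp
  moreover have "path_edges ?c = path_edges (a # xs @ [b]) \<union> path_edges (b # ys)"
    using path_edges_append[of "a # xs" b ys] by simp
  moreover have "path_edges (b # ys @ [a]) = insert {last (b # ys), a} (path_edges (b # ys))"
    using path_edges_snoc[of "b # ys" a] by simp
  ultimately show ?thesis by auto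
qed

lemma cycle_edges_subset: "e \<in> cycle_edges c \<Longrightarrow> e \<subseteq> set c"
proof -
  assume "e \<in> cycle_edges c"
  then obtain i where i: "e = {c ! i, c ! (Suc i mod length c)}" "i < length c"
    unfolding cycle_edges_def by blast
  have "0 < length c" using i(2) by linarith
  then have "Suc i mod length c < length c" by (rule mod_less_divisor)
  then show ?thesis using i by (auto intro!: nth_mem)
qed

lemma closing_edge_not_path_edge:
  assumes "distinct c" "3 \<le> length c"
  shows "{hd c, last c} \<notin> path_edges c"
proof
  assume "{hd c, last c} \<in> path_edges c"
  then obtain i where i: "{hd c, last c} = {c ! i, c ! Suc i}" "Suc i < length c"
    unfolding path_edges_def by blast
  have ne: "c \<noteq> []" using assms by auto
  have L: "last c = c ! (length c - 1)" "hd c = c ! 0" using ne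
    by (simp_all add: last_conv_nth hd_conv_nth)
  have "(c!0 = c!i \<and> c!(length c - 1) = c ! Suc i) \<or> (c!0 = c ! Suc i \<and> c!(length c - 1) = c!i)"
    using i(1) L by (auto simp: doubleton_eq_iff)
  then show False
  proof
    assume "c!0 = c!i \<and> c!(length c - 1) = c ! Suc i"
    then have "0 = i" "length c - 1 = Suc i" using assms i(2) nth_eq_iff_index_eq by fastforce+
    then show False using assms by simp
  next
    assume "c!0 = c ! Suc i \<and> c!(length c - 1) = c!i"
    then have "0 = Suc i" using assms i(2) nth_eq_iff_index_eq by fastforce
    then show False by simp
  qed
qed

lemma path_edges_at_last:
  assumes "distinct p" "2 \<le> length p"
  shows "{e \<in> path_edges p. last p \<in> e} \<subseteq> {{p ! (length p - 2), last p}}"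
proof
  fix e assume "e \<in> {e \<in> path_edges p. last p \<in> e}"
  then obtain i where i: "e = {p ! i, p ! Suc i}" "Suc i < length p" "last p \<in> e"
    unfolding path_edges_def by blast
  have ne: "p \<noteq> []" using assms by auto
  have L: "last p = p ! (length p - 1)" using ne by (simp add: last_conv_nth)
  have "p ! i \<noteq> p ! (length p - 1)" using assms i(2) nth_eq_iff_index_eq by fastforce
  then have "p ! Suc i = p ! (length p - 1)" using i L by auto
  then have "Suc i = length p - 1" using assms i(2) nth_eq_iff_index_eq by fastforce
  then have "i = length p - 2" by simp
  then show "e \<in> {{p ! (length p - 2), last p}}" using i L \<open>Suc i = length p - 1\<close> by auto
qed

lemma path_edges_subset: "e \<in> path_edges p \<Longrightarrow> e \<subseteq> set p"
  by (induction p rule: induct_list012) auto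

lemma cycle_edges_rotate1: "cycle_edges (rotate1 c) = cycle_edges c"
proof (cases c)
  case (Cons x xs)
  show ?thesis
  proof (cases xs)
    case (Cons y ys)
    have "cycle_edges (x # xs) = insert {last xs, x} (insert {x, hd xs} (path_edges xs))"
      using cycle_edges_path_edges[of "x # xs"] Cons by simp
    moreover have "cycle_edges (xs @ [x]) = insert {x, hd xs} (insert {last xs, x} (path_edges xs))"
      using cycle_edges_path_edges[of "xs @ [x]"] path_edges_snoc[of xs x] Cons by simp
    ultimately show ?thesis using \<open>c = x # xs\<close> by (simp add: insert_commute)
  qed (simp add: \<open>c = x # xs\<close>)
qed simp

lemma cycle_edges_rotate: "cycle_edges (rotate n c) = cycle_edges c"
  by (induction n) (simp_all add: cycle_edges_rotate1)

lemma cycle_edges_at_vertex: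
  assumes d: "distinct c" and l: "3 \<le> length c" and v: "v \<in> set c"
  obtains a b where "a \<noteq> b" "{e \<in> cycle_edges c. v \<in> e} = {{v, a}, {v, b}}"
proof -
  obtain i where i: "i < length c" "c ! i = v" using v by (metis in_set_conv_nth)
  have "c \<noteq> []" using i by auto
  define r where "r = rotate i c"
  have r: "distinct r" "length r = length c" "cycle_edges r = cycle_edges c" "hd r = v"
    unfolding r_def using d i hd_rotate_conv_nth[OF \<open>c \<noteq> []\<close>, of i] by (auto simp: cycle_edges_rotate)
  obtain b t where rt: "r = v # b # t" "t \<noteq> []"
    using r(2,4) l
    by (cases r rule: list.exhaust; cases "tl r" rule: list.exhaust; cases "tl (tl r)" rule: list.exhaust) auto
  then obtain zs a where rs: "r = v # b # zs @ [a]" by (metis append_butlast_last_id)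
  have "cycle_edges r = insert {a, v} (insert {v, b} (path_edges (b # zs @ [a])))"
    using cycle_edges_path_edges[of r] rs by simp
  moreover have "v \<notin> e" if "e \<in> path_edges (b # zs @ [a])" for e
    using path_edges_subset[OF that] r(1) rs by auto
  ultimately have "{e \<in> cycle_edges c. v \<in> e} = {{v, a}, {v, b}}"
    using r(3) by (auto simp: insert_commute)
  moreover have "a \<noteq> b" using r(1) rs by auto
  ultimately show ?thesis using that by blast
qed

lemma cycle_degree:
  assumes "distinct c" "3 \<le> length c" "v \<in> set c"
  shows "card {e \<in> cycle_edges c. v \<in> e} = 2"
proof -
  obtain a b where "a \<noteq> b" "{e \<in> cycle_edges c. v \<in> e} = {{v, a}, {v, b}}"
    using cycle_edges_at_vertex[OF assms] by blast
  then show ?thesis by (simp add: doubleton_eq_iff)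
qed

section \<open>Tadpoles, thetas and dumbbells built from lists\<close>

lemma interior_Cons_snoc [simp]: "interior (a # m @ [b]) = set m"
  unfolding interior_def by simp

lemma tadpole_of_cycle_and_tail:
  assumes c: "is_cycle c" and a: "a \<in> set c"
    and q: "distinct q" "q \<noteq> []" "set q \<inter> set c = {}"
  shows "tadpole_graph (set c \<union> set q) (cycle_edges c \<union> path_edges (a # q))"
  unfolding tadpole_graph_def
proof (intro exI conjI)
  show "is_cycle c" by (rule c)
  show "is_path (a # q)" unfolding is_path_def using a q by (cases q) auto
  show "set (a # q) \<inter> set c = {hd (a # q)}" using a q by auto
  show "set c \<union> set q = set c \<union> set (a # q)" using a by auto
qed simp

text \<open>A cycle through \<open>a\<close> and \<open>b\<close> together with a further \<open>a\<close>--\<open>b\<close> path (an ear) whose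
  interior avoids the cycle; if the ear is a single edge it must be a chord.\<close>
lemma theta_of_cycle_and_ear:
  assumes d: "distinct (a # xs @ b # ys)" and long: "xs \<noteq> [] \<or> ys \<noteq> []"
    and q: "distinct q" "set q \<inter> set (a # xs @ b # ys) = {}"
    and chord: "q = [] \<Longrightarrow> xs \<noteq> [] \<and> ys \<noteq> []"
  shows "theta_graph (set (a # xs @ b # ys) \<union> set q)
           (cycle_edges (a # xs @ b # ys) \<union> path_edges (a # q @ [b]))"
proof -
  define p1 where "p1 = a # xs @ [b]"
  define p2 where "p2 = a # rev ys @ [b]"
  define p3 where "p3 = a # q @ [b]"
  have edges: "cycle_edges (a # xs @ b # ys) = path_edges p1 \<union> path_edges p2"
  proof -
    have "path_edges p2 = path_edges (b # ys @ [a])"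
      using path_edges_rev[of "b # ys @ [a]"] unfolding p2_def by simp
    then show ?thesis using cycle_edges_split[of a xs b ys] unfolding p1_def by simp
  qed
  have no_common: "set xs \<inter> set ys = {}" "set q \<inter> set xs = {}" "set q \<inter> set ys = {}"
    using d q by auto
  have "theta_graph (set p1 \<union> set p2 \<union> set p3) (path_edges p1 \<union> path_edges p2 \<union> path_edges p3)"
    unfolding theta_graph_def
  proof (intro exI conjI)
    show "a \<noteq> b" using d by simp
    show "is_path p1" "is_path p2" "is_path p3" unfolding is_path_def p1_def p2_def p3_def
      using d q by auto
    show "hd p1 = a" "hd p2 = a" "hd p3 = a" "last p1 = b" "last p2 = b" "last p3 = b"
      unfolding p1_def p2_def p3_def by simp_all
    show "p1 \<noteq> p2"
    proof
      assume "p1 = p2"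
      then have "set xs = set ys" unfolding p1_def p2_def by simp
      then show False using long no_common(1) by auto
    qed
    show "p1 \<noteq> p3" unfolding p1_def p3_def using chord no_common(2) by (cases xs) auto
    show "p2 \<noteq> p3" unfolding p2_def p3_def using chord no_common(3) by (cases ys rule: rev_cases) auto
    show "interior p1 \<inter> set p2 = {}" "interior p1 \<inter> set p3 = {}"
      "interior p2 \<inter> set p1 = {}" "interior p2 \<inter> set p3 = {}"
      "interior p3 \<inter> set p1 = {}" "interior p3 \<inter> set p2 = {}"
      unfolding p1_def p2_def p3_def using d q by auto
  qed simp_all
  moreover have "set p1 \<union> set p2 \<union> set p3 = set (a # xs @ b # ys) \<union> set q"
    unfolding p1_def p2_def p3_def by auto
  ultimately show ?thesis using edges unfolding p3_def by (simp add: Un_assoc)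
qed

lemma dumbbell_of_cycles_and_path:
  assumes c: "is_cycle c1" "is_cycle c2" "set c1 \<inter> set c2 = {}"
    and ab: "a \<in> set c1" "b \<in> set c2"
    and q: "distinct q" "set q \<inter> (set c1 \<union> set c2) = {}"
  shows "dumbbell_graph (set c1 \<union> set c2 \<union> set q)
           (cycle_edges c1 \<union> cycle_edges c2 \<union> path_edges (a # q @ [b]))"
  unfolding dumbbell_graph_def
proof (intro exI conjI)
  show "is_path (a # q @ [b])" unfolding is_path_def using c ab q by auto
  show "set c1 \<union> set c2 \<union> set q = set c1 \<union> set c2 \<union> set (a # q @ [b])" using ab by auto
qed (use c ab q in simp_all)

section \<open>Connectivity\<close>

definition conn :: "'a set set \<Rightarrow> 'a set \<Rightarrow> bool" where
  "conn F W \<longleftrightarrow> (\<forall>a\<in>W. \<forall>b\<in>W. (a, b) \<in> (adj F)\<^sup>*)"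

lemma adj_sym: "sym (adj F)"
  unfolding sym_def adj_def
proof (intro allI impI)
  fix x y assume "(x, y) \<in> {(x, y). {x, y} \<in> F}"
  then have "{y, x} \<in> F" by (simp add: insert_commute)
  then show "(y, x) \<in> {(x, y). {x, y} \<in> F}" by simp
qed

lemma walk_sym: "(a, b) \<in> (adj F)\<^sup>* \<Longrightarrow> (b, a) \<in> (adj F)\<^sup>*"
  by (rule symD[OF sym_rtrancl[OF adj_sym]])

lemma walk_mono: "F \<subseteq> G \<Longrightarrow> (a, b) \<in> (adj F)\<^sup>* \<Longrightarrow> (a, b) \<in> (adj G)\<^sup>*"
proof -
  assume "F \<subseteq> G"
  then have "adj F \<subseteq> adj G" unfolding adj_def by auto
  then show "(a, b) \<in> (adj F)\<^sup>* \<Longrightarrow> (a, b) \<in> (adj G)\<^sup>*" using rtrancl_mono by blast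
qed

lemma conn_from:
  assumes "w0 \<in> W" "\<forall>z\<in>W. (w0, z) \<in> (adj F)\<^sup>*"
  shows "conn F W"
  unfolding conn_def
proof (intro ballI)
  fix a b assume "a \<in> W" "b \<in> W"
  then have "(w0, a) \<in> (adj F)\<^sup>*" "(w0, b) \<in> (adj F)\<^sup>*" using assms by auto
  then have "(a, w0) \<in> (adj F)\<^sup>*" "(w0, b) \<in> (adj F)\<^sup>*" by (auto intro: walk_sym)
  then show "(a, b) \<in> (adj F)\<^sup>*" by (rule rtrancl_trans)
qed

lemma conn_mono: "conn F W \<Longrightarrow> F \<subseteq> G \<Longrightarrow> conn G W"
  unfolding conn_def by (meson walk_mono)

lemma conn_union:
  assumes "conn F W1" "conn G W2" "W1 \<inter> W2 \<noteq> {}"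
  shows "conn (F \<union> G) (W1 \<union> W2)"
proof -
  obtain w where w: "w \<in> W1" "w \<in> W2" using assms(3) by blast
  have c1: "conn (F \<union> G) W1" using conn_mono[OF assms(1)] by blast
  have c2: "conn (F \<union> G) W2" using conn_mono[OF assms(2)] by blast
  show ?thesis
  proof (rule conn_from[of w])
    show "w \<in> W1 \<union> W2" using w by simp
    show "\<forall>z\<in>W1 \<union> W2. (w, z) \<in> (adj (F \<union> G))\<^sup>*"
      using c1 c2 w unfolding conn_def by blast
  qed
qed

lemma conn_path: "p \<noteq> [] \<Longrightarrow> conn (path_edges p) (set p)"
proof (induction p rule: induct_list012)
  case 1 then show ?case by simp
next
  case (2 x) then show ?case by (simp add: conn_def)
next
  case (3 a b xs)
  have c: "conn (path_edges (b # xs)) (set (b # xs))" using 3(2) by simp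
  have "conn {{a,b}} {a,b}"
  proof (rule conn_from[of a])
    have "(a,b) \<in> adj {{a,b}}" by (simp add: adj_def)
    then show "\<forall>z\<in>{a,b}. (a,z) \<in> (adj {{a,b}})\<^sup>*" by auto
  qed simp
  from conn_union[OF this c] have X: "conn ({{a, b}} \<union> path_edges (b # xs)) ({a, b} \<union> set (b # xs))"
    by simp
  have e1: "{{a,b}} \<union> path_edges (b#xs) = path_edges (a#b#xs)" by simp
  have e2: "{a,b} \<union> set (b#xs) = set (a#b#xs)" by auto
  show ?case using X unfolding e1 e2 .
qed

lemma conn_cycle: "3 \<le> length c \<Longrightarrow> conn (cycle_edges c) (set c)"
proof -
  assume l: "3 \<le> length c"
  then have "path_edges c \<subseteq> cycle_edges c" using cycle_edges_path_edges[of c] by auto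
  moreover have "c \<noteq> []" using l by auto
  ultimately show ?thesis using conn_path[of c] conn_mono by blast
qed

lemma conn_tadpole: "tadpole_graph Vc Ec \<Longrightarrow> conn Ec Vc"
proof -
  assume "tadpole_graph Vc Ec"
  then obtain c p where h: "is_cycle c" "is_path p" "set p \<inter> set c = {hd p}"
      "Vc = set c \<union> set p" "Ec = cycle_edges c \<union> path_edges p"
    unfolding tadpole_graph_def by (elim exE conjE) (rule that; assumption)
  have ne: "p \<noteq> []" using h(2) unfolding is_path_def by auto
  have l: "3 \<le> length c" using h(1) unfolding is_cycle_def by auto
  have "set c \<inter> set p \<noteq> {}" using h(3) by auto
  from conn_union[OF conn_cycle[OF l] conn_path[OF ne] this] show "conn Ec Vc" using h by simp
qed

lemma conn_theta: "theta_graph Vc Ec \<Longrightarrow> conn Ec Vc"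
proof -
  assume "theta_graph Vc Ec"
  then obtain a b p1 p2 p3 where h: "is_path p1" "is_path p2" "is_path p3"
      "hd p1 = a" "hd p2 = a" "hd p3 = a"
      "Vc = set p1 \<union> set p2 \<union> set p3"
      "Ec = path_edges p1 \<union> path_edges p2 \<union> path_edges p3"
    unfolding theta_graph_def by (elim exE conjE) (rule that; assumption)
  have ne: "p1 \<noteq> []" "p2 \<noteq> []" "p3 \<noteq> []" using h(1-3) unfolding is_path_def by auto
  have a: "a \<in> set p1" "a \<in> set p2" "a \<in> set p3"
    using hd_in_set[OF ne(1)] hd_in_set[OF ne(2)] hd_in_set[OF ne(3)] h(4-6) by simp_all
  have i1: "set p1 \<inter> set p2 \<noteq> {}" using a by blast
  have c12: "conn (path_edges p1 \<union> path_edges p2) (set p1 \<union> set p2)"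
    using conn_union[OF conn_path[OF ne(1)] conn_path[OF ne(2)] i1] .
  have i2: "(set p1 \<union> set p2) \<inter> set p3 \<noteq> {}" using a by blast
  show "conn Ec Vc" unfolding h(7,8)
    using conn_union[OF c12 conn_path[OF ne(3)] i2] .
qed

lemma conn_dumbbell: "dumbbell_graph Vc Ec \<Longrightarrow> conn Ec Vc"
proof -
  assume "dumbbell_graph Vc Ec"
  then obtain c1 c2 p where h: "is_cycle c1" "is_cycle c2" "is_path p"
      "hd p \<in> set c1" "last p \<in> set c2"
      "Vc = set c1 \<union> set c2 \<union> set p"
      "Ec = cycle_edges c1 \<union> cycle_edges c2 \<union> path_edges p"
    unfolding dumbbell_graph_def by (elim exE conjE) (rule that; assumption)
  have ne: "p \<noteq> []" using h(3) unfolding is_path_def by auto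
  have l: "3 \<le> length c1" "3 \<le> length c2" using h(1,2) unfolding is_cycle_def by auto
  have i1: "set c1 \<inter> set p \<noteq> {}" using h(4) hd_in_set[OF ne] by blast
  have c1: "conn (cycle_edges c1 \<union> path_edges p) (set c1 \<union> set p)"
    using conn_union[OF conn_cycle[OF l(1)] conn_path[OF ne] i1] .
  have i2: "(set c1 \<union> set p) \<inter> set c2 \<noteq> {}" using h(5) last_in_set[OF ne] by blast
  from conn_union[OF c1 conn_cycle[OF l(2)] i2]
  have "conn (cycle_edges c1 \<union> path_edges p \<union> cycle_edges c2) (set c1 \<union> set p \<union> set c2)" .
  then show "conn Ec Vc" unfolding h(6,7) by (simp add: Un_ac)
qed

text \<open>The shapes of the states in \<open>\<Theta> \<union> \<D>\<close>, from which edges of the current set may be removed.\<close>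
definition theta_or_dumbbell :: "'a set \<Rightarrow> 'a set set \<Rightarrow> bool" where
  "theta_or_dumbbell Vc Ec \<longleftrightarrow> theta_graph Vc Ec \<or> dumbbell_graph Vc Ec"

lemma conn_theta_or_dumbbell: "theta_or_dumbbell Vc Ec \<Longrightarrow> conn Ec Vc"
  unfolding theta_or_dumbbell_def using conn_theta conn_dumbbell by blast

section \<open>Components\<close>

lemma reach_self: "a \<in> reach A a"
  unfolding reach_def by simp

lemma reach_step: "z \<in> reach A a \<Longrightarrow> {z, z'} \<in> A \<Longrightarrow> z' \<in> reach A a"
  unfolding reach_def adj_def by (auto intro: rtrancl_into_rtrancl)

lemma reach_eq:
  assumes "b \<in> reach A a" shows "reach A b = reach A a"
proof -
  have ab: "(a,b) \<in> (adj A)\<^sup>*" using assms unfolding reach_def by auto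
  then have ba: "(b,a) \<in> (adj A)\<^sup>*" by (rule walk_sym)
  show ?thesis unfolding reach_def
  proof (intro set_eqI iffI)
    fix z assume "z \<in> {y. (b, y) \<in> (adj A)\<^sup>*}"
    then have "(b,z) \<in> (adj A)\<^sup>*" by simp
    then show "z \<in> {y. (a, y) \<in> (adj A)\<^sup>*}" using rtrancl_trans[OF ab] by simp
  next
    fix z assume "z \<in> {y. (a, y) \<in> (adj A)\<^sup>*}"
    then have "(a,z) \<in> (adj A)\<^sup>*" by simp
    then show "z \<in> {y. (b, y) \<in> (adj A)\<^sup>*}" using rtrancl_trans[OF ba] by simp
  qed
qed

lemma reach_disjoint: "b \<notin> reach A a \<Longrightarrow> reach A a \<inter> reach A b = {}"
proof (rule ccontr)
  assume b: "b \<notin> reach A a" and "reach A a \<inter> reach A b \<noteq> {}"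
  then obtain z where z: "z \<in> reach A a" "z \<in> reach A b" by blast
  have "reach A z = reach A a" "reach A z = reach A b" using reach_eq z by metis+
  then show False using b reach_self[of b A] by simp
qed

lemma comp_edges_eq: "b \<in> reach A a \<Longrightarrow> comp_edges A b = comp_edges A a"
  unfolding comp_edges_def using reach_eq by metis

lemma reach_of_modified:
  assumes Add: "\<forall>e\<in>Add. e \<subseteq> W" and W: "W = (\<Union>a\<in>X. reach A a)"
    and F: "F = ((\<Union>a\<in>X. comp_edges A a) \<union> Add) - Rem"
    and cF: "conn F W" and w: "w \<in> W"
  shows "reach ((A \<union> Add) - Rem) w = W"
proof
  have FB: "F \<subseteq> (A \<union> Add) - Rem" unfolding F comp_edges_def by blast
  show "W \<subseteq> reach ((A \<union> Add) - Rem) w"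
  proof
    fix z assume "z \<in> W"
    then have "(w, z) \<in> (adj F)\<^sup>*" using cF w unfolding conn_def by blast
    then show "z \<in> reach ((A \<union> Add) - Rem) w" unfolding reach_def using walk_mono[OF FB] by blast
  qed
  show "reach ((A \<union> Add) - Rem) w \<subseteq> W"
  proof
    fix z assume "z \<in> reach ((A \<union> Add) - Rem) w"
    then have "(w, z) \<in> (adj ((A \<union> Add) - Rem))\<^sup>*" unfolding reach_def by simp
    then show "z \<in> W"
    proof (induction rule: rtrancl_induct)
      case (step y z)
      then have yz: "{y, z} \<in> (A \<union> Add) - Rem" by (simp add: adj_def)
      show ?case
      proof (cases "{y, z} \<in> Add")
        case True
        then show ?thesis using Add by auto
      next
        case False
        then have "{y, z} \<in> A" using yz by simp
        moreover have "y \<in> (\<Union>a\<in>X. reach A a)" using step.IH W by simp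
        then obtain a where a: "a \<in> X" "y \<in> reach A a" by blast
        ultimately have "z \<in> reach A a" using reach_step by metis
        then show ?thesis using a(1) unfolding W by blast
      qed
    qed (rule w)
  qed
qed

lemma component_of_modified:
  assumes two: "\<forall>e\<in>A. \<exists>p q. e = {p, q}"
    and Add: "\<forall>e\<in>Add. e \<subseteq> W" and W: "W = (\<Union>a\<in>X. reach A a)"
    and F: "F = ((\<Union>a\<in>X. comp_edges A a) \<union> Add) - Rem"
    and cF: "conn F W" and w: "w \<in> W"
  shows "comp_verts ((A \<union> Add) - Rem) w = W \<and> comp_edges ((A \<union> Add) - Rem) w = F"
proof -
  let ?B = "(A \<union> Add) - Rem"
  have R: "reach ?B w = W" by (rule reach_of_modified[OF Add W F cF w])
  have "e \<in> F" if e: "e \<in> ?B" "e \<subseteq> W" for e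
  proof (cases "e \<in> Add")
    case True
    then show ?thesis using e unfolding F by blast
  next
    case False
    then have eA: "e \<in> A" "e \<notin> Rem" using e by auto
    obtain p q where pq: "e = {p, q}" using two eA by blast
    obtain a where a: "a \<in> X" "p \<in> reach A a" using e(2) W pq by auto
    have "q \<in> reach A a" using reach_step[OF a(2)] eA pq by simp
    then have "e \<in> comp_edges A a" using a eA pq unfolding comp_edges_def by simp
    then show ?thesis using a eA unfolding F by blast
  qed
  moreover have "e \<subseteq> W" if "e \<in> F" for e
    using that Add unfolding F W comp_edges_def by blast
  moreover have "F \<subseteq> ?B" unfolding F comp_edges_def by blast
  ultimately have "comp_edges ?B w = F" unfolding comp_edges_def R by blast
  then show ?thesis unfolding comp_verts_def R by simp
qed

section \<open>Degrees\<close>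

lemma deg_insert:
  assumes "finite B" "e \<notin> B"
  shows "deg (insert e B) w = deg B w + (if w \<in> e then 1 else 0)"
proof -
  have "{e' \<in> insert e B. w \<in> e'} = (if w \<in> e then insert e {e' \<in> B. w \<in> e'} else {e' \<in> B. w \<in> e'})"
    by auto
  then show ?thesis unfolding deg_def using assms by simp
qed

lemma deg_remove:
  assumes "finite B" "e \<in> B"
  shows "deg (B - {e}) w = deg B w - (if w \<in> e then 1 else 0)"
proof -
  have "{e' \<in> B - {e}. w \<in> e'} = {e' \<in> B. w \<in> e'} - {e}" by auto
  then show ?thesis unfolding deg_def using assms by (simp add: card_Diff_singleton)
qed

lemma deg_in_component_edges:
  assumes "w \<in> reach B u" "\<forall>e\<in>B. \<exists>a b. e = {a,b}"
  shows "{e \<in> comp_edges B u. w \<in> e} = {e \<in> B. w \<in> e}"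
proof
  show "{e \<in> B. w \<in> e} \<subseteq> {e \<in> comp_edges B u. w \<in> e}"
  proof
    fix e assume e: "e \<in> {e \<in> B. w \<in> e}"
    then obtain a b where ab: "e = {a,b}" using assms(2) by blast
    have "e = {w, a} \<or> e = {w, b}" using e ab by auto
    moreover have "{w,a} \<in> B \<Longrightarrow> a \<in> reach B u" "{w,b} \<in> B \<Longrightarrow> b \<in> reach B u"
      using reach_step[OF assms(1)] by blast+
    ultimately have "e \<subseteq> reach B u" using assms(1) e ab by auto
    then show "e \<in> {e \<in> comp_edges B u. w \<in> e}" using e unfolding comp_edges_def by auto
  qed
qed (auto simp: comp_edges_def)

lemma deg_in_component:
  assumes "w \<in> reach B u" "\<forall>e\<in>B. \<exists>a b. e = {a, b}"
  shows "card {e \<in> comp_edges B u. w \<in> e} = deg B w"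
  using deg_in_component_edges[OF assms] unfolding deg_def by simp

lemma cycle_component_degree:
  assumes two: "\<forall>e\<in>B. \<exists>a b. e = {a, b}" and cyc: "cycle_graph (comp_verts B u) (comp_edges B u)"
    and w: "w \<in> reach B u"
  shows "deg B w = 2"
proof -
  obtain c where c: "is_cycle c" "reach B u = set c" "comp_edges B u = cycle_edges c"
    using cyc unfolding cycle_graph_def comp_verts_def by blast
  then have "card {e \<in> cycle_edges c. w \<in> e} = 2"
    using cycle_degree w unfolding is_cycle_def by auto
  then show ?thesis using deg_in_component[OF w two] c(3) by simp
qed

lemma tadpole_component_degree:
  assumes two: "\<forall>e\<in>B. \<exists>a b. e = {a, b}" and tad: "tadpole_graph (comp_verts B u) (comp_edges B u)"
  shows "\<exists>w\<in>reach B u. deg B w \<le> 1"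
proof -
  obtain c p where h: "is_cycle c" "is_path p" "set p \<inter> set c = {hd p}"
    "comp_verts B u = set c \<union> set p" "comp_edges B u = cycle_edges c \<union> path_edges p"
    using tad unfolding tadpole_graph_def by (elim exE conjE) (rule that; assumption)
  have dp: "distinct p" "2 \<le> length p" using h(2) unfolding is_path_def by auto
  have lp: "last p \<in> set p" "last p \<noteq> hd p" using dp by (cases p; auto)+
  then have lc: "last p \<notin> set c" using h(3) by blast
  have "{e \<in> comp_edges B u. last p \<in> e} \<subseteq> {{p ! (length p - 2), last p}}"
    using path_edges_at_last[OF dp] cycle_edges_subset lc h(5) by blast
  then have "card {e \<in> comp_edges B u. last p \<in> e} \<le> 1"
    using card_mono[of "{{p ! (length p - 2), last p}}"] by fastforce
  moreover have lr: "last p \<in> reach B u" using h(4) lp unfolding comp_verts_def by simp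
  ultimately show ?thesis using deg_in_component[OF lr two] by auto
qed

lemma not_cycle_nor_tadpole:
  assumes two: "\<forall>e\<in>B. \<exists>a b. e = {a, b}"
    and dg: "\<forall>w\<in>reach B u. deg B w \<ge> 2"
    and w3: "w3 \<in> reach B u" "deg B w3 \<ge> 3"
  shows "\<not> cycle_graph (comp_verts B u) (comp_edges B u) \<and> \<not> tadpole_graph (comp_verts B u) (comp_edges B u)"
  using cycle_component_degree[OF two _ w3(1)] tadpole_component_degree[OF two] w3(2) dg by fastforce

section \<open>States and positive moves of the chain\<close>

lemma state_with_two_defects:
  assumes B: "B \<subseteq> E" and uv: "u \<in> V" "v \<in> V" "u \<noteq> v"
    and d2: "\<forall>w\<in>V. w \<noteq> u \<and> w \<noteq> v \<longrightarrow> deg B w = 2"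
    and ou: "odd (deg B u)" and ov: "odd (deg B v)" and s4: "4 \<le> deg B u + deg B v"
  shows "(B, u, v) \<in> states V E"
proof -
  have "bdry V B = {u, v}"
    unfolding bdry_def using uv d2 ou ov by auto
  moreover have "deg B w \<ge> 1" if "w \<in> V" for w
    using that d2 ou ov odd_pos by (cases "w = u \<or> w = v") (auto simp: Suc_le_eq)
  ultimately show ?thesis unfolding states_def using B uv s4 by auto
qed

lemma move_weight_nonneg: "n > 0 \<Longrightarrow> move_weight V E n s e \<ge> 0"
  unfolding move_weight_def by (auto split: prod.splits)

lemma move_weight_add:
  "(B, u, v) \<in> cls_E V E \<union> cls_T V E \<Longrightarrow> e \<notin> B \<Longrightarrow> move_weight V E n (B, u, v) e > 0"
  unfolding move_weight_def by simp

lemma move_weight_remove: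
  assumes "(B, u, v) \<notin> cls_E V E \<union> cls_T V E" "(B, u, v) \<in> cls_Theta V E \<union> cls_D V E"
    "e \<in> B" "n > 0"
  shows "move_weight V E n (B, u, v) e > 0"
  using assms unfolding move_weight_def by (auto simp: is_bridge_def)

text \<open>A single move of positive weight gives a transition of positive probability, since all
  other summands of \<open>P_chain\<close> are non-negative.\<close>
lemma P_chain_move_u:
  assumes "finite V" "n > 0" "u' \<in> V" "{u,u'} \<in> E" "move_weight V E n (B,u,v) {u,u'} > 0"
  shows "P_chain V E n (B,u,v) ((B - {{u,u'}}) \<union> ({{u,u'}} - B), u', v) > 0"
proof -
  let ?t = "((B - {{u,u'}}) \<union> ({{u,u'}} - B), u', v)"
  let ?f = "\<lambda>x. if ?t = ((B - {{u, x}}) \<union> ({{u, x}} - B), x, v) then move_weight V E n (B,u,v) {u, x} else 0"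
  let ?g = "\<lambda>x. if ?t = ((B - {{v, x}}) \<union> ({{v, x}} - B), u, x) then move_weight V E n (B,u,v) {v, x} else 0"
  have fin: "finite {u' \<in> V. {u, u'} \<in> E}" using assms(1) by simp
  have "?f u' \<le> sum ?f {u' \<in> V. {u, u'} \<in> E}"
    by (rule member_le_sum) (use assms move_weight_nonneg fin in auto)
  moreover have "0 \<le> sum ?g {v' \<in> V. {v, v'} \<in> E}"
    by (rule sum_nonneg) (use assms move_weight_nonneg in auto)
  moreover have "?f u' > 0" using assms by simp
  ultimately show ?thesis unfolding P_chain_def by simp
qed

lemma P_chain_move_v:
  assumes "finite V" "n > 0" "v' \<in> V" "{v,v'} \<in> E" "move_weight V E n (B,u,v) {v,v'} > 0"
  shows "P_chain V E n (B,u,v) ((B - {{v,v'}}) \<union> ({{v,v'}} - B), u, v') > 0"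
proof -
  let ?t = "((B - {{v,v'}}) \<union> ({{v,v'}} - B), u, v')"
  let ?f = "\<lambda>x. if ?t = ((B - {{u, x}}) \<union> ({{u, x}} - B), x, v) then move_weight V E n (B,u,v) {u, x} else 0"
  let ?g = "\<lambda>x. if ?t = ((B - {{v, x}}) \<union> ({{v, x}} - B), u, x) then move_weight V E n (B,u,v) {v, x} else 0"
  have fin: "finite {u' \<in> V. {v, u'} \<in> E}" using assms(1) by simp
  have "?g v' \<le> sum ?g {v' \<in> V. {v, v'} \<in> E}"
    by (rule member_le_sum) (use assms move_weight_nonneg fin in auto)
  moreover have "0 \<le> sum ?f {u' \<in> V. {u, u'} \<in> E}"
    by (rule sum_nonneg) (use assms move_weight_nonneg in auto)
  moreover have "?g v' > 0" using assms by simp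
  ultimately show ?thesis unfolding P_chain_def by simp
qed

lemma symdiff_insert: "e \<notin> B \<Longrightarrow> (B - {e}) \<union> ({e} - B) = insert e B"
  by auto

lemma symdiff_remove: "e \<in> B \<Longrightarrow> (B - {e}) \<union> ({e} - B) = B - {e}"
  by auto

lemma reaches_add_u:
  assumes "finite V" "n > 0" "u' \<in> V" "{u, u'} \<in> E" "{u, u'} \<notin> B"
    "(B, u, v) \<in> cls_E V E \<union> cls_T V E"
  shows "reaches V E n (B, u, v) (insert {u, u'} B, u', v)"
  using P_chain_move_u[OF assms(1-4) move_weight_add[OF assms(6,5)]] assms(5)
  unfolding reaches_def symdiff_insert[OF assms(5)] by auto

lemma reaches_add_v:
  assumes "finite V" "n > 0" "v' \<in> V" "{v, v'} \<in> E" "{v, v'} \<notin> B"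
    "(B, u, v) \<in> cls_E V E \<union> cls_T V E"
  shows "reaches V E n (B, u, v) (insert {v, v'} B, u, v')"
  using P_chain_move_v[OF assms(1-4) move_weight_add[OF assms(6,5)]] assms(5)
  unfolding reaches_def symdiff_insert[OF assms(5)] by auto

lemma reaches_remove_u:
  assumes "finite V" "n > 0" "u' \<in> V" "{u, u'} \<in> E" "{u, u'} \<in> B"
    "(B, u, v) \<notin> cls_E V E \<union> cls_T V E" "(B, u, v) \<in> cls_Theta V E \<union> cls_D V E"
  shows "reaches V E n (B, u, v) (B - {{u, u'}}, u', v)"
  using P_chain_move_u[OF assms(1-4) move_weight_remove[OF assms(6,7,5,2)]]
  unfolding reaches_def symdiff_remove[OF assms(5)] by auto

lemma reaches_remove_v:
  assumes "finite V" "n > 0" "v' \<in> V" "{v, v'} \<in> E" "{v, v'} \<in> B"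
    "(B, u, v) \<notin> cls_E V E \<union> cls_T V E" "(B, u, v) \<in> cls_Theta V E \<union> cls_D V E"
  shows "reaches V E n (B, u, v) (B - {{v, v'}}, u, v')"
  using P_chain_move_v[OF assms(1-4) move_weight_remove[OF assms(6,7,5,2)]]
  unfolding reaches_def symdiff_remove[OF assms(5)] by auto

lemma reaches_trans [trans]: "reaches V E n s t \<Longrightarrow> reaches V E n t r \<Longrightarrow> reaches V E n s r"
  unfolding reaches_def by (rule rtranclp_trans)

section \<open>A 2-factor of a cubic graph\<close>

locale two_factor_of_cubic =
  fixes V :: "'a set" and E :: "'a set set" and A :: "'a set set"
  assumes finite_V: "finite V" and simple: "simple_graph V E" and cubic: "cubic V E"
    and two_factor: "A \<in> two_factors V E"
begin

lemma A_subset_E: "A \<subseteq> E"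
  using two_factor unfolding two_factors_def by simp

lemma deg_A: "w \<in> V \<Longrightarrow> deg A w = 2"
  using two_factor unfolding two_factors_def by simp

lemma deg_E: "w \<in> V \<Longrightarrow> deg E w = 3"
  using cubic unfolding cubic_def by simp

lemma edge_E: "e \<in> E \<Longrightarrow> \<exists>a b. a \<in> V \<and> b \<in> V \<and> a \<noteq> b \<and> e = {a, b}"
  using simple unfolding simple_graph_def by blast

lemma finite_E: "finite E"
proof -
  have "E \<subseteq> Pow V" using edge_E by blast
  then show ?thesis using finite_subset finite_V by blast
qed

lemma finite_A: "finite A"
  using finite_subset[OF A_subset_E finite_E] .

lemma edge_ends: "{a,b} \<in> E \<Longrightarrow> a \<noteq> b \<and> a \<in> V \<and> b \<in> V"
proof -
  assume "{a,b} \<in> E"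
  then obtain p q where "p \<in> V" "q \<in> V" "p \<noteq> q" "{a,b} = {p,q}" using edge_E by blast
  then show ?thesis by (auto simp: doubleton_eq_iff)
qed

lemma A_edge_ends: "{a, b} \<in> A \<Longrightarrow> a \<noteq> b \<and> a \<in> V \<and> b \<in> V"
  using edge_ends A_subset_E by blast

lemma edges_are_pairs: "B \<subseteq> E \<Longrightarrow> \<forall>e\<in>B. \<exists>a b. e = {a, b}"
  using edge_E by blast

lemma component_in_V: "B \<subseteq> E \<Longrightarrow> u \<in> V \<Longrightarrow> reach B u \<subseteq> V"
proof
  fix z assume B: "B \<subseteq> E" and u: "u \<in> V" and "z \<in> reach B u"
  then have "(u, z) \<in> (adj B)\<^sup>*" unfolding reach_def by simp
  then show "z \<in> V"
  proof (induction rule: rtrancl_induct)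
    case (step y z)
    then have "{y, z} \<in> E" using B by (auto simp: adj_def)
    then show ?case using edge_ends by blast
  qed (rule u)
qed

lemma third_A_neighbour:
  assumes w: "w \<in> V" and e: "{w,a} \<in> A" "{w,b} \<in> A" "{w,c} \<in> A" and ab: "a \<noteq> b"
  shows "c = a \<or> c = b"
proof (rule ccontr)
  assume "\<not> (c = a \<or> c = b)"
  then have ca: "c \<noteq> a" "c \<noteq> b" by auto
  have sub: "{{w,a},{w,b},{w,c}} \<subseteq> {e \<in> A. w \<in> e}" using e by auto
  have "card {{w,a},{w,b},{w,c}} = 3"
    using ab ca by (auto simp: doubleton_eq_iff)
  moreover have "card {{w,a},{w,b},{w,c}} \<le> card {e \<in> A. w \<in> e}"
    by (rule card_mono[OF _ sub]) (simp add: finite_A)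
  ultimately show False using deg_A[OF w] unfolding deg_def by simp
qed

lemma two_A_neighbours:
  assumes w: "w \<in> V"
  shows "\<exists>a b. a \<noteq> b \<and> {w,a} \<in> A \<and> {w,b} \<in> A"
proof -
  have "card {e \<in> A. w \<in> e} = 2" using deg_A[OF w] unfolding deg_def .
  then obtain e1 e2 where e: "e1 \<noteq> e2" "{e \<in> A. w \<in> e} = {e1,e2}" by (auto simp: card_2_iff)
  then have e1: "e1 \<in> A" "w \<in> e1" and e2: "e2 \<in> A" "w \<in> e2" by auto
  obtain p q where pq: "e1 = {p,q}" using edge_E e1 A_subset_E by blast
  obtain a where a: "e1 = {w,a}" using pq e1(2) by auto
  obtain r s where rs: "e2 = {r,s}" using edge_E e2 A_subset_E by blast
  obtain b where b: "e2 = {w,b}" using rs e2(2) by auto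
  have "a \<noteq> b" using a b e(1) by auto
  then show ?thesis using a b e1 e2 by blast
qed

lemma non_A_edge_unique:
  assumes w: "w \<in> V" and a: "{w,a} \<in> E" "{w,a} \<notin> A" and b: "{w,b} \<in> E" "{w,b} \<notin> A"
  shows "a = b"
proof (rule ccontr)
  assume ab: "a \<noteq> b"
  have S: "{e \<in> A. w \<in> e} \<union> {{w,a},{w,b}} \<subseteq> {e \<in> E. w \<in> e}" using A_subset_E a b by auto
  have "card ({e \<in> A. w \<in> e} \<union> {{w,a},{w,b}}) = card {e \<in> A. w \<in> e} + card {{w,a},{w,b}}"
    by (rule card_Un_disjoint) (use finite_A a b in auto)
  also have "\<dots> = 4" using deg_A[OF w] ab unfolding deg_def by (simp add: doubleton_eq_iff)
  finally have "4 \<le> card {e \<in> E. w \<in> e}"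
    using card_mono[OF _ S] finite_E by (metis (no_types, lifting) finite_subset mem_Collect_eq subsetI)
  then show False using deg_E[OF w] unfolding deg_def by simp
qed

lemma non_A_edge_exists:
  assumes w: "w \<in> V"
  shows "\<exists>w'. {w,w'} \<in> E \<and> {w,w'} \<notin> A"
proof -
  have "{e \<in> A. w \<in> e} \<subseteq> {e \<in> E. w \<in> e}" using A_subset_E by auto
  moreover have "card {e \<in> A. w \<in> e} < card {e \<in> E. w \<in> e}"
    using deg_A[OF w] deg_E[OF w] unfolding deg_def by simp
  ultimately have "\<exists>e. e \<in> {e \<in> E. w \<in> e} \<and> e \<notin> {e \<in> A. w \<in> e}"
    by (metis (no_types, lifting) subsetI subset_antisym less_irrefl)
  then obtain e where e: "e \<in> E" "w \<in> e" "e \<notin> A" by auto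
  obtain p q where "e = {p,q}" using edge_E e by blast
  then obtain w' where "e = {w,w'}" using e(2) by auto
  then show ?thesis using e by blast
qed



subsection \<open>Every component of the 2-factor is a cycle\<close>

text \<open>A cycle all of whose edges lie in \<open>A\<close> is closed under A-adjacency, because each of its
  vertices already has its two A-edges on it.\<close>
lemma A_cycle_closed:
  assumes c: "distinct c" "3 \<le> length c" "cycle_edges c \<subseteq> A" and v: "v \<in> set c" "v \<in> V"
    and u: "{v, u} \<in> A"
  shows "{v, u} \<in> cycle_edges c"
proof -
  obtain a b where "a \<noteq> b" "{e \<in> cycle_edges c. v \<in> e} = {{v, a}, {v, b}}"
    using cycle_edges_at_vertex[OF c(1,2) v(1)] by blast
  then have ab: "a \<noteq> b" "{v, a} \<in> cycle_edges c" "{v, b} \<in> cycle_edges c" by blast+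
  then have "u = a \<or> u = b" using third_A_neighbour[OF v(2) _ _ u ab(1)] c(3) by blast
  then show ?thesis using ab by blast
qed

lemma A_cycle_is_component:
  assumes c: "distinct c" "3 \<le> length c" "cycle_edges c \<subseteq> A" "set c \<subseteq> V" and w: "w \<in> set c"
  shows "reach A w = set c \<and> comp_edges A w = cycle_edges c"
proof -
  have closed: "{v, u} \<in> cycle_edges c" if "v \<in> set c" "{v, u} \<in> A" for v u
    using A_cycle_closed[OF c(1-3) that(1) _ that(2)] that(1) c(4) by auto
  have "reach A w \<subseteq> set c"
  proof
    fix v assume "v \<in> reach A w"
    then have "(w, v) \<in> (adj A)\<^sup>*" unfolding reach_def by simp
    then show "v \<in> set c"
    proof (induction rule: rtrancl_induct)
      case (step y u)
      then have "{y, u} \<in> cycle_edges c" using closed by (simp add: adj_def)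
      then show ?case using cycle_edges_subset by blast
    qed (rule w)
  qed
  moreover have "set c \<subseteq> reach A w"
  proof
    fix v assume "v \<in> set c"
    then have "(w, v) \<in> (adj (cycle_edges c))\<^sup>*" using conn_cycle[OF c(2)] w unfolding conn_def by blast
    then show "v \<in> reach A w" unfolding reach_def using walk_mono[OF c(3)] by blast
  qed
  ultimately have R: "reach A w = set c" by blast
  have "comp_edges A w \<subseteq> cycle_edges c"
  proof
    fix e assume "e \<in> comp_edges A w"
    then have e: "e \<in> A" "e \<subseteq> set c" unfolding comp_edges_def R by auto
    obtain a b where "e = {a, b}" using edge_E e A_subset_E by blast
    then show "e \<in> cycle_edges c" using closed e by auto
  qed
  moreover have "cycle_edges c \<subseteq> comp_edges A w"
    unfolding comp_edges_def R using c(3) cycle_edges_subset by blast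
  ultimately show ?thesis using R by blast
qed

lemma maximal_A_path:
  assumes w: "w \<in> V" and wz: "{w, z} \<in> A"
  obtains q where "distinct (z # w # q)" "set (z # w # q) \<subseteq> V" "path_edges (z # w # q) \<subseteq> A"
    "\<And>u. {last (z # w # q), u} \<in> A \<Longrightarrow> u \<in> set (z # w # q)"
proof -
  have zw: "z \<noteq> w" "z \<in> V" using A_edge_ends[OF wz] by auto
  define P where "P q \<longleftrightarrow> distinct (z # w # q) \<and> set q \<subseteq> V \<and> path_edges (z # w # q) \<subseteq> A" for q
  have P0: "P []" unfolding P_def using zw wz by (auto simp: insert_commute)
  have bound: "\<forall>q. P q \<longrightarrow> length q < card V"
  proof (intro allI impI)
    fix q assume "P q"
    then have d: "distinct (z # w # q)" and s: "set (z # w # q) \<subseteq> V" unfolding P_def using w zw by auto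
    have "card (set (z # w # q)) \<le> card V" by (rule card_mono[OF finite_V s])
    then show "length q < card V" using distinct_card[OF d] by simp
  qed
  obtain q where q: "P q" and qmax: "\<forall>q'. P q' \<longrightarrow> length q' \<le> length q"
    using ex_has_greatest_nat[of P "[]" length "card V", OF P0 bound] by blast
  have "u \<in> set (z # w # q)" if u: "{last (z # w # q), u} \<in> A" for u
  proof (rule ccontr)
    assume new: "u \<notin> set (z # w # q)"
    have "path_edges (z # w # q @ [u]) = insert {last (z # w # q), u} (path_edges (z # w # q))"
      using path_edges_snoc[of "z # w # q" u] by simp
    then have "P (q @ [u])" using q u new A_edge_ends[OF u] unfolding P_def by auto
    then show False using qmax by fastforce
  qed
  then show ?thesis using that q w zw unfolding P_def by auto
qed

text \<open>A maximal A-path closes up: the last vertex is A-adjacent to the first one, since an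
  inner vertex of the path cannot receive a third A-edge.\<close>
lemma maximal_A_path_closes:
  assumes pd: "distinct p" and pV: "set p \<subseteq> V" and pA: "path_edges p \<subseteq> A" and pl: "2 \<le> length p"
    and ext: "\<And>u. {last p, u} \<in> A \<Longrightarrow> u \<in> set p"
  shows "3 \<le> length p" "{last p, hd p} \<in> A"
proof -
  define k where "k = length p - 1"
  have pne: "p \<noteq> []" using pl by auto
  have k: "k < length p" "p ! k = last p" "1 \<le> k" unfolding k_def using pl pne by (auto simp: last_conv_nth)
  have LV: "last p \<in> V" using pV pne by auto
  have A_step: "{p ! i, p ! Suc i} \<in> A" if "Suc i < length p" for i
    using path_edges_nth[OF that] pA by blast
  obtain a b where "a \<noteq> b" "{last p, a} \<in> A" "{last p, b} \<in> A" using two_A_neighbours[OF LV] by blast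
  then obtain x where x: "x \<noteq> p ! (k - 1)" "{last p, x} \<in> A" by metis
  obtain j where j: "j < length p" "x = p ! j" using ext[OF x(2)] by (metis in_set_conv_nth)
  have xL: "x \<noteq> last p" using A_edge_ends[OF x(2)] by auto
  have jk: "j \<noteq> k" "j \<noteq> k - 1" using j k x xL by auto
  have j0: "j = 0"
  proof (rule ccontr)
    assume j0: "j \<noteq> 0"
    have lt: "j + 1 < k" using jk j k j0 by (simp add: k_def)
    have e1: "{p ! j, p ! (j - 1)} \<in> A" using A_step[of "j - 1"] j j0 by (simp add: insert_commute)
    have e2: "{p ! j, p ! (j + 1)} \<in> A" using A_step[of j] lt k by simp
    have e3: "{p ! j, last p} \<in> A" using x(2) j by (simp add: insert_commute)
    have "p ! (j + 1) \<noteq> p ! (j - 1)" using nth_eq_iff_index_eq[OF pd, of "j + 1" "j - 1"] lt k j0 by simp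
    then have "last p = p ! (j - 1) \<or> last p = p ! (j + 1)"
      using third_A_neighbour[of "p ! j"] pV j e1 e2 e3 by (metis nth_mem subsetD)
    moreover have "last p \<noteq> p ! (j - 1)" "last p \<noteq> p ! (j + 1)"
      using nth_eq_iff_index_eq[OF pd, of k "j - 1"] nth_eq_iff_index_eq[OF pd, of k "j + 1"] k lt by auto
    ultimately show False by simp
  qed
  show "{last p, hd p} \<in> A" using x(2) j j0 pne by (simp add: hd_conv_nth)
  show "3 \<le> length p"
  proof (rule ccontr)
    assume "\<not> 3 \<le> length p"
    then have "k - 1 = 0" unfolding k_def by simp
    then show False using x(1) j j0 by simp
  qed
qed

text \<open>\<open>component_cycle A w z c\<close>: the component of \<open>w\<close> in \<open>(V, A)\<close> is the cycle \<open>c\<close>, listed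
  from \<open>w\<close> to its A-neighbour \<open>z\<close>, so that \<open>{w, z}\<close> is the closing edge.\<close>
definition component_cycle :: "'a set set \<Rightarrow> 'a \<Rightarrow> 'a \<Rightarrow> 'a list \<Rightarrow> bool" where
  "component_cycle B w z c \<longleftrightarrow> is_cycle c \<and> hd c = w \<and> last c = z \<and>
     reach B w = set c \<and> comp_edges B w = insert {w, z} (path_edges c)"

lemma component_cycle_exists:
  assumes w: "w \<in> V" and wz: "{w, z} \<in> A"
  shows "\<exists>c. component_cycle A w z c"
proof -
  obtain q where q: "distinct (z # w # q)" "set (z # w # q) \<subseteq> V" "path_edges (z # w # q) \<subseteq> A"
      "\<And>u. {last (z # w # q), u} \<in> A \<Longrightarrow> u \<in> set (z # w # q)"
    using maximal_A_path[OF w wz] by blast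
  have closes: "3 \<le> length (z # w # q)" "{last (z # w # q), z} \<in> A"
    using maximal_A_path_closes[OF q(1-3) _ q(4)] by auto
  have cyc_edges: "cycle_edges (z # w # q) = insert {last (w # q), z} (path_edges (z # w # q))"
    using cycle_edges_path_edges[of "z # w # q"] by simp
  then have "cycle_edges (z # w # q) \<subseteq> A" using q(3) closes(2) by simp
  from A_cycle_is_component[OF q(1) closes(1) this q(2)]
  have comp: "reach A w = set (z # w # q)" "comp_edges A w = cycle_edges (z # w # q)" by auto
  define c where "c = w # q @ [z]"
  have "path_edges c = insert {last (w # q), z} (path_edges (w # q))"
    unfolding c_def using path_edges_snoc[of "w # q" z] by simp
  then have "comp_edges A w = insert {w, z} (path_edges c)"
    using comp(2) cyc_edges by (auto simp: insert_commute)
  moreover have "is_cycle c" using q(1) closes(1) unfolding is_cycle_def c_def by auto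
  ultimately have "component_cycle A w z c"
    unfolding component_cycle_def using comp(1) by (auto simp: c_def)
  then show ?thesis by blast
qed

lemma component_cycleD:
  assumes "component_cycle B w z c"
  shows "distinct c" "3 \<le> length c" "hd c = w" "last c = z" "reach B w = set c"
    "comp_edges B w = insert {w, z} (path_edges c)" "comp_edges B w = cycle_edges c"
    "w \<in> set c" "{w, z} \<notin> path_edges c"
proof -
  show c: "distinct c" "3 \<le> length c" "hd c = w" "last c = z" "reach B w = set c"
    "comp_edges B w = insert {w, z} (path_edges c)"
    using assms unfolding component_cycle_def is_cycle_def by auto
  then show "comp_edges B w = cycle_edges c"
    using cycle_edges_path_edges[of c] by (simp add: insert_commute)
  show "w \<in> set c" using c(5) reach_self by metis
  show "{w, z} \<notin> path_edges c" using closing_edge_not_path_edge[OF c(1,2)] c(3,4) by simp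
qed


subsection \<open>Shapes of the components of the intermediate states\<close>

lemma modified_component_shape:
  assumes S: "S W F" and S_conn: "\<And>W' F'. S W' F' \<Longrightarrow> conn F' W'"
    and Add: "\<forall>e\<in>Add. e \<subseteq> W" and W: "W = (\<Union>a\<in>X. reach A a)"
    and F: "F = ((\<Union>a\<in>X. comp_edges A a) \<union> Add) - Rem" and w: "w \<in> W"
  shows "S (comp_verts ((A \<union> Add) - Rem) w) (comp_edges ((A \<union> Add) - Rem) w)"
  using component_of_modified[OF edges_are_pairs[OF A_subset_E] Add W F S_conn[OF S] w] S by simp

lemma component_cycle_split:
  assumes c: "component_cycle A x y c" and v: "v \<in> set c" "v \<noteq> x" "v \<noteq> y" "{x, v} \<notin> A"
  obtains xs ys where "c = x # xs @ v # ys" "xs \<noteq> []" "ys \<noteq> []"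
proof -
  note C = component_cycleD[OF c]
  obtain as ys where s: "c = as @ v # ys" using split_list[OF v(1)] by blast
  then obtain xs where xs: "as = x # xs" using v(2) C(3) by (cases as) auto
  have "xs \<noteq> []"
  proof
    assume "xs = []"
    then have "{x, v} \<in> comp_edges A x" using C(6) s xs by simp
    then show False using v(4) unfolding comp_edges_def by simp
  qed
  moreover have "ys \<noteq> []" using s v(3) C(4) by auto
  ultimately show ?thesis using that s xs by simp
qed

lemma component_cycle_of_vertex:
  assumes "v \<in> V" obtains z d where "component_cycle A v z d"
  using two_A_neighbours[OF assms] component_cycle_exists[OF assms] by blast

lemma component_cycles_disjoint:
  assumes "component_cycle A x y c" "component_cycle A v z d" "v \<notin> set c"
  shows "set c \<inter> set d = {}"
  using reach_disjoint[of v A x] assms component_cycleD(5)[OF assms(1)] component_cycleD(5)[OF assms(2)]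
  by simp

text \<open>Adding a non-A edge \<open>{x, z}\<close> to the 2-factor: a chord of the cycle of \<open>x\<close> gives a
  theta, an edge to another cycle gives a dumbbell.\<close>
lemma added_edge_shape:
  assumes x: "x \<in> V" and xz: "{x, z} \<in> E" "{x, z} \<notin> A"
  shows "theta_or_dumbbell (comp_verts (insert {x, z} A) z) (comp_edges (insert {x, z} A) z)"
proof -
  obtain y c where c: "component_cycle A x y c" using component_cycle_of_vertex[OF x] by blast
  note C = component_cycleD[OF c]
  have zx: "z \<noteq> x" "z \<in> V" using edge_ends[OF xz(1)] by auto
  have zy: "z \<noteq> y" using C(6) xz(2) unfolding comp_edges_def by auto
  have B: "insert {x, z} A = (A \<union> {{x, z}}) - {}" by simp
  show ?thesis
  proof (cases "z \<in> set c")
    case True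
    then obtain xs ys where s: "c = x # xs @ z # ys" "xs \<noteq> []" "ys \<noteq> []"
      using component_cycle_split[OF c _ zx(1) zy xz(2)] by blast
    have "theta_graph (set c \<union> set []) (cycle_edges c \<union> path_edges (x # [] @ [z]))"
      using theta_of_cycle_and_ear[of x xs z ys "[]"] C(1) s by simp
    then have "theta_or_dumbbell (set c) (cycle_edges c \<union> {{x, z}})"
      unfolding theta_or_dumbbell_def by simp
    then show ?thesis unfolding B
      by (rule modified_component_shape[where S = theta_or_dumbbell and X = "{x}", OF _ conn_theta_or_dumbbell])
        (use C(5,7,8) True in auto)
  next
    case False
    obtain w d where d: "component_cycle A z w d" using component_cycle_of_vertex[OF zx(2)] by blast
    note D = component_cycleD[OF d]
    have "dumbbell_graph (set c \<union> set d \<union> set []) (cycle_edges c \<union> cycle_edges d \<union> path_edges (x # [] @ [z]))"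
      by (rule dumbbell_of_cycles_and_path)
        (use C D component_cycles_disjoint[OF c d False] in \<open>auto simp: is_cycle_def\<close>)
    then have "theta_or_dumbbell (set c \<union> set d) (cycle_edges c \<union> cycle_edges d \<union> {{x, z}})"
      unfolding theta_or_dumbbell_def by simp
    then show ?thesis unfolding B
      by (rule modified_component_shape[where S = theta_or_dumbbell and X = "{x, z}", OF _ conn_theta_or_dumbbell])
        (use C(5,7,8) D(5,7,8) in auto)
  qed
qed

text \<open>Adding the non-A edge \<open>{x, x'}\<close> and removing the A-edge \<open>{x, y}\<close> gives a tadpole: the
  cycle through \<open>x'\<close> with the rest of the old cycle of \<open>x\<close> as its tail, ending in \<open>y\<close>.\<close>
lemma swapped_edge_shape:
  assumes x: "x \<in> V" and xy: "{x, y} \<in> A" and xx': "{x, x'} \<in> E" "{x, x'} \<notin> A"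
    and w: "w \<in> reach A x \<union> reach A x'"
  shows "tadpole_graph (comp_verts (insert {x, x'} A - {{x, y}}) w)
           (comp_edges (insert {x, x'} A - {{x, y}}) w)"
proof -
  obtain c where c: "component_cycle A x y c" using component_cycle_exists[OF x xy] by blast
  note C = component_cycleD[OF c]
  have x': "x' \<in> V" "x' \<noteq> x" using edge_ends[OF xx'(1)] by auto
  have x'y: "x' \<noteq> y" using xy xx'(2) by auto
  have B: "insert {x, x'} A - {{x, y}} = (A \<union> {{x, x'}}) - {{x, y}}" by auto
  have open_cycle: "insert {x, y} (path_edges c) \<union> {{x, x'}} - {{x, y}} = path_edges c \<union> {{x, x'}}"
    using C(9) x'y by (auto simp: doubleton_eq_iff)
  show ?thesis
  proof (cases "x' \<in> set c")
    case True
    then obtain xs ys where s: "c = x # xs @ x' # ys" "xs \<noteq> []" "ys \<noteq> []"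
      using component_cycle_split[OF c _ x'(2) x'y xx'(2)] by blast
    have "tadpole_graph (set (x # xs @ [x']) \<union> set ys)
        (cycle_edges (x # xs @ [x']) \<union> path_edges (x' # ys))"
      by (rule tadpole_of_cycle_and_tail) (use C(1) s in \<open>auto simp: is_cycle_def Suc_le_eq\<close>)
    moreover have "cycle_edges (x # xs @ [x']) \<union> path_edges (x' # ys) = path_edges c \<union> {{x, x'}}"
      using cycle_edges_path_edges[of "x # xs @ [x']"] path_edges_append[of "x # xs" x' ys] s(1)
      by (auto simp: insert_commute)
    moreover have "set (x # xs @ [x']) \<union> set ys = set c" using s(1) by auto
    ultimately have T: "tadpole_graph (set c) (path_edges c \<union> {{x, x'}})" by simp
    have wc: "w \<in> set c" using w True C(5) reach_eq[of x' A x] by auto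
    show ?thesis unfolding B
      by (rule modified_component_shape[where S = tadpole_graph and X = "{x}", OF T conn_tadpole])
        (use C(5,6) True open_cycle C(8) wc in auto)
  next
    case False
    obtain w' d where d: "component_cycle A x' w' d" using component_cycle_of_vertex[OF x'(1)] by blast
    note D = component_cycleD[OF d]
    have disj: "set c \<inter> set d = {}" using component_cycles_disjoint[OF c d False] .
    have "tadpole_graph (set d \<union> set c) (cycle_edges d \<union> path_edges (x' # c))"
      by (rule tadpole_of_cycle_and_tail) (use C D disj in \<open>auto simp: is_cycle_def\<close>)
    moreover have "c \<noteq> []" using C(2) by auto
    then have "path_edges (x' # c) = insert {x, x'} (path_edges c)"
      using path_edges_Cons[of c x'] C(3) by (simp add: insert_commute)
    moreover have "{x, y} \<notin> cycle_edges d" using cycle_edges_subset[of "{x, y}" d] C(8) disj by blast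
    then have "(insert {x, y} (path_edges c) \<union> cycle_edges d \<union> {{x, x'}}) - {{x, y}}
        = path_edges c \<union> {{x, x'}} \<union> cycle_edges d"
      using open_cycle by blast
    ultimately have T: "tadpole_graph (set c \<union> set d)
        ((insert {x, y} (path_edges c) \<union> cycle_edges d \<union> {{x, x'}}) - {{x, y}})"
      by (simp add: Un_commute Un_left_commute)
    show ?thesis unfolding B
      by (rule modified_component_shape[where S = tadpole_graph and X = "{x, x'}", OF T conn_tadpole])
        (use C(5,6,8) D(5,7,8) w in auto)
  qed
qed


text \<open>The state reached after swapping at both ends of the A-edge \<open>{x, y}\<close>: the non-A edges
  \<open>{x, x'}\<close>, \<open>{y, y'}\<close> are added and \<open>{x, y}\<close> is removed.  The component of \<open>x'\<close> then
  consists of the (at most three) old cycles through \<open>x, x', y'\<close>, with these edge changes.\<close>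
definition swap_verts :: "'a \<Rightarrow> 'a \<Rightarrow> 'a \<Rightarrow> 'a set" where
  "swap_verts x x' y' = reach A x \<union> reach A x' \<union> reach A y'"

definition swap_edges :: "'a \<Rightarrow> 'a \<Rightarrow> 'a \<Rightarrow> 'a \<Rightarrow> 'a set set" where
  "swap_edges x y x' y' = (comp_edges A x \<union> comp_edges A x' \<union> comp_edges A y' \<union> {{x, x'}, {y, y'}}) - {{x, y}}"

context
  fixes x y x' y'
  assumes x: "x \<in> V" and xy: "{x, y} \<in> A" and xx': "{x, x'} \<in> E" "{x, x'} \<notin> A"
    and yy': "{y, y'} \<in> E" "{y, y'} \<notin> A"
begin

lemma swap_vertices_distinct:
  shows "x' \<in> V" "y' \<in> V" "y \<in> V" "x' \<noteq> x" "y' \<noteq> y" "x \<noteq> y" "x' \<noteq> y" "y' \<noteq> x" "x' \<noteq> y'"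
proof -
  show "x' \<in> V" "x' \<noteq> x" using edge_ends[OF xx'(1)] by auto
  show "y' \<in> V" "y' \<noteq> y" "y \<in> V" using edge_ends[OF yy'(1)] by auto
  show "x \<noteq> y" using A_edge_ends[OF xy] by simp
  show "x' \<noteq> y" using xy xx'(2) by auto
  show "y' \<noteq> x" using xy yy'(2) by (auto simp: insert_commute)
  show "x' \<noteq> y'"
  proof
    assume e: "x' = y'"
    have "x = y"
      by (rule non_A_edge_unique[of x' x y])
        (use e edge_ends[OF xx'(1)] xx' yy' in \<open>auto simp: insert_commute\<close>)
    then show False using A_edge_ends[OF xy] by simp
  qed
qed

lemma swap_edges_same_cycle:
  assumes c: "component_cycle A x y c" and "x' \<in> set c" "y' \<in> set c"
  shows "swap_verts x x' y' = set c" "swap_edges x y x' y' = path_edges c \<union> {{x, x'}, {y, y'}}"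
proof -
  note C = component_cycleD[OF c]
  have "reach A x' = set c" "reach A y' = set c" using assms reach_eq[of _ A x] C(5) by auto
  then show "swap_verts x x' y' = set c" unfolding swap_verts_def C(5) by simp
  have "comp_edges A x' = comp_edges A x" "comp_edges A y' = comp_edges A x"
    using assms comp_edges_eq[of _ A x] C(5) by auto
  then show "swap_edges x y x' y' = path_edges c \<union> {{x, x'}, {y, y'}}"
    unfolding swap_edges_def C(6) using C(9) swap_vertices_distinct by (auto simp: doubleton_eq_iff)
qed

text \<open>Case \<open>x'\<close> before \<open>y'\<close> on the cycle \<open>x \<dots> y\<close>: two cycles joined by the arc from \<open>x'\<close> to
  \<open>y'\<close>, a dumbbell.\<close>
lemma swap_shape_forward:
  assumes c: "component_cycle A x y c" and s: "c = x # xs @ x' # ms @ y' # ys" and xs: "xs \<noteq> []"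
  shows "theta_or_dumbbell (swap_verts x x' y') (swap_edges x y x' y')"
proof -
  note C = component_cycleD[OF c]
  note f = swap_vertices_distinct
  have ys: "ys \<noteq> []" "last ys = y" using C(4) s f(5) by auto
  have pe: "path_edges c = path_edges (x # xs @ [x']) \<union> path_edges (x' # ms @ [y']) \<union> path_edges (y' # ys)"
    using s path_edges_append[of "x # xs" x' "ms @ y' # ys"] path_edges_append[of "x' # ms" y' ys]
    by (simp add: Un_assoc)
  have "ys \<noteq> [y]"
  proof
    assume "ys = [y]"
    then have "{y', y} \<in> comp_edges A x" using pe C(6) by auto
    then show False using yy'(2) unfolding comp_edges_def by (auto simp: insert_commute)
  qed
  then have l2: "2 \<le> length ys" using ys by (cases ys) (auto simp: Suc_le_eq split: if_splits)
  have "dumbbell_graph (set (x # xs @ [x']) \<union> set (y' # ys) \<union> set ms)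
      (cycle_edges (x # xs @ [x']) \<union> cycle_edges (y' # ys) \<union> path_edges (x' # ms @ [y']))"
    by (rule dumbbell_of_cycles_and_path) (use C(1) s xs l2 in \<open>auto simp: is_cycle_def Suc_le_eq\<close>)
  moreover have "cycle_edges (x # xs @ [x']) = insert {x, x'} (path_edges (x # xs @ [x']))"
    using cycle_edges_path_edges[of "x # xs @ [x']"] by (simp add: insert_commute)
  moreover have "cycle_edges (y' # ys) = insert {y, y'} (path_edges (y' # ys))"
    using cycle_edges_path_edges[of "y' # ys"] ys by (simp add: Suc_le_eq)
  moreover have "set (x # xs @ [x']) \<union> set (y' # ys) \<union> set ms = set c" using s by auto
  ultimately have "dumbbell_graph (set c) (path_edges c \<union> {{x, x'}, {y, y'}})"
    unfolding pe by (simp add: Un_ac)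
  then show ?thesis using swap_edges_same_cycle[OF c] s unfolding theta_or_dumbbell_def by simp
qed

text \<open>Case \<open>y'\<close> before \<open>x'\<close>: the arc \<open>y' \<dots> x' \<dots> y\<close> closes up through \<open>{y, y'}\<close> and the arc
  \<open>x \<dots> y'\<close> becomes an ear through \<open>{x, x'}\<close>, a theta.\<close>
lemma swap_shape_backward:
  assumes c: "component_cycle A x y c" and s: "c = xs @ y' # ms @ x' # ys"
  shows "theta_or_dumbbell (swap_verts x x' y') (swap_edges x y x' y')"
proof -
  note C = component_cycleD[OF c]
  note f = swap_vertices_distinct
  have xs: "xs \<noteq> []" "hd xs = x" using C(3) s f(8) by (cases xs; auto)+
  have ys: "ys \<noteq> []" "last ys = y" using C(4) s f(7) by auto
  have pe: "path_edges c = path_edges (xs @ [y']) \<union> path_edges (y' # ms @ x' # ys)"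
    using s path_edges_append[of xs y' "ms @ x' # ys"] by simp
  have "theta_graph (set (y' # ms @ x' # ys) \<union> set (rev xs))
      (cycle_edges (y' # ms @ x' # ys) \<union> path_edges (y' # rev xs @ [x']))"
    by (rule theta_of_cycle_and_ear) (use C(1) s xs ys in auto)
  moreover have "cycle_edges (y' # ms @ x' # ys) = insert {y, y'} (path_edges (y' # ms @ x' # ys))"
    using cycle_edges_path_edges[of "y' # ms @ x' # ys"] ys by (simp add: Suc_le_eq)
  moreover have "path_edges (y' # rev xs @ [x']) = insert {x, x'} (path_edges (xs @ [y']))"
    using path_edges_rev[of "x' # xs @ [y']"] path_edges_Cons[of "xs @ [y']" x'] xs
    by (simp add: insert_commute)
  moreover have "set (y' # ms @ x' # ys) \<union> set (rev xs) = set c" using s by auto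
  ultimately have "theta_graph (set c) (path_edges c \<union> {{x, x'}, {y, y'}})"
    unfolding pe by (simp add: Un_ac insert_commute)
  then show ?thesis using swap_edges_same_cycle[OF c] s unfolding theta_or_dumbbell_def by simp
qed

text \<open>Case \<open>x'\<close> on the cycle of \<open>x\<close> but \<open>y'\<close> on another cycle \<open>d\<close>: the arc \<open>x \<dots> x'\<close> closes
  up, and the arc \<open>x' \<dots> y\<close> followed by \<open>{y, y'}\<close> joins it to \<open>d\<close>, a dumbbell.\<close>
lemma swap_shape_one_outside:
  assumes c: "component_cycle A x y c" and s: "c = x # xs @ x' # ys" and xs: "xs \<noteq> []"
    and y'c: "y' \<notin> set c"
  shows "theta_or_dumbbell (swap_verts x x' y') (swap_edges x y x' y')"
proof -
  note C = component_cycleD[OF c]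
  note f = swap_vertices_distinct
  obtain w d where d: "component_cycle A y' w d" using component_cycle_of_vertex[OF f(2)] by blast
  note D = component_cycleD[OF d]
  have disj: "set c \<inter> set d = {}" by (rule component_cycles_disjoint[OF c d y'c])
  have ys: "ys \<noteq> []" "last ys = y" using C(4) s f(7) by auto
  have pe: "path_edges c = path_edges (x # xs @ [x']) \<union> path_edges (x' # ys)"
    using s path_edges_append[of "x # xs" x' ys] by simp
  have "dumbbell_graph (set (x # xs @ [x']) \<union> set d \<union> set ys)
      (cycle_edges (x # xs @ [x']) \<union> cycle_edges d \<union> path_edges (x' # ys @ [y']))"
    by (rule dumbbell_of_cycles_and_path) (use C(1) D s xs disj in \<open>auto simp: is_cycle_def Suc_le_eq\<close>)
  moreover have "cycle_edges (x # xs @ [x']) = insert {x, x'} (path_edges (x # xs @ [x']))"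
    using cycle_edges_path_edges[of "x # xs @ [x']"] by (simp add: insert_commute)
  moreover have "path_edges (x' # ys @ [y']) = insert {y, y'} (path_edges (x' # ys))"
    using path_edges_snoc[of "x' # ys" y'] ys by simp
  moreover have "set (x # xs @ [x']) \<union> set d \<union> set ys = set c \<union> set d" using s by auto
  ultimately have "dumbbell_graph (set c \<union> set d) (path_edges c \<union> cycle_edges d \<union> {{x, x'}, {y, y'}})"
    unfolding pe by (simp add: Un_ac)
  moreover have "swap_verts x x' y' = set c \<union> set d"
    using reach_eq[of x' A x] C(5) D(5) s unfolding swap_verts_def by auto
  moreover have "swap_edges x y x' y' = path_edges c \<union> cycle_edges d \<union> {{x, x'}, {y, y'}}"
  proof -
    have "comp_edges A x' = comp_edges A x" using comp_edges_eq[of x' A x] C(5) s by simp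
    moreover have "{x, y} \<notin> cycle_edges d" using cycle_edges_subset[of "{x, y}" d] C(8) disj by blast
    ultimately show ?thesis
      unfolding swap_edges_def C(6) D(7) using C(9) f by (auto simp: doubleton_eq_iff)
  qed
  ultimately show ?thesis unfolding theta_or_dumbbell_def by simp
qed

text \<open>Case \<open>x', y'\<close> both off the cycle \<open>c\<close> of \<open>x\<close>, on a common cycle \<open>d\<close>: the opened cycle
  \<open>c\<close> becomes an ear of \<open>d\<close> from \<open>x'\<close> to \<open>y'\<close>, a theta.\<close>
lemma swap_shape_common_outside:
  assumes c: "component_cycle A x y c" and x'c: "x' \<notin> set c" and y'c: "y' \<notin> set c"
    and y'x': "y' \<in> reach A x'"
  shows "theta_or_dumbbell (swap_verts x x' y') (swap_edges x y x' y')"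
proof -
  note C = component_cycleD[OF c]
  note f = swap_vertices_distinct
  obtain w d where d: "component_cycle A x' w d" using component_cycle_of_vertex[OF f(1)] by blast
  note D = component_cycleD[OF d]
  have disj: "set c \<inter> set d = {}" by (rule component_cycles_disjoint[OF c d x'c])
  have "y' \<in> set d" using D(5) y'x' by simp
  then obtain ds' es where s': "d = ds' @ y' # es" using split_list by metis
  then obtain ds where s: "d = x' # ds @ y' # es" using D(3) f(9) by (cases ds') auto
  have long: "ds \<noteq> [] \<or> es \<noteq> []" using D(2) s by auto
  have cne: "c \<noteq> []" using C(2) by auto
  have "theta_graph (set d \<union> set c) (cycle_edges d \<union> path_edges (x' # c @ [y']))"
    unfolding s by (rule theta_of_cycle_and_ear) (use D(1) C(1) disj s long cne in auto)
  moreover have "path_edges (x' # c @ [y']) = insert {x, x'} (insert {y, y'} (path_edges c))"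
    using path_edges_Cons[of "c @ [y']" x'] path_edges_snoc[OF cne, of y'] C(3,4) cne
    by (simp add: insert_commute)
  then have "cycle_edges d \<union> path_edges (x' # c @ [y']) = path_edges c \<union> cycle_edges d \<union> {{x, x'}, {y, y'}}"
    by auto
  ultimately have "theta_graph (set c \<union> set d) (path_edges c \<union> cycle_edges d \<union> {{x, x'}, {y, y'}})"
    by (simp add: Un_commute)
  moreover have "swap_verts x x' y' = set c \<union> set d"
    using reach_eq[OF y'x'] C(5) D(5) unfolding swap_verts_def by auto
  moreover have "swap_edges x y x' y' = path_edges c \<union> cycle_edges d \<union> {{x, x'}, {y, y'}}"
  proof -
    have "comp_edges A y' = comp_edges A x'" using comp_edges_eq[OF y'x'] .
    moreover have "{x, y} \<notin> cycle_edges d" using cycle_edges_subset[of "{x, y}" d] C(8) disj by blast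
    ultimately show ?thesis
      unfolding swap_edges_def C(6) D(7) using C(9) f by (auto simp: doubleton_eq_iff)
  qed
  ultimately show ?thesis unfolding theta_or_dumbbell_def by simp
qed

text \<open>Case \<open>x', y'\<close> on two further, different cycles \<open>d\<close> and \<open>e\<close>: the opened cycle \<open>c\<close>
  joins them, a dumbbell.\<close>
lemma swap_shape_two_outside:
  assumes c: "component_cycle A x y c" and x'c: "x' \<notin> set c" and y'c: "y' \<notin> set c"
    and y'x': "y' \<notin> reach A x'"
  shows "theta_or_dumbbell (swap_verts x x' y') (swap_edges x y x' y')"
proof -
  note C = component_cycleD[OF c]
  note f = swap_vertices_distinct
  obtain w d where d: "component_cycle A x' w d" using component_cycle_of_vertex[OF f(1)] by blast
  obtain w' e where e: "component_cycle A y' w' e" using component_cycle_of_vertex[OF f(2)] by blast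
  note D = component_cycleD[OF d] and Ee = component_cycleD[OF e]
  have disj: "set c \<inter> set d = {}" "set c \<inter> set e = {}" "set d \<inter> set e = {}"
    using component_cycles_disjoint[OF c d x'c] component_cycles_disjoint[OF c e y'c]
      component_cycles_disjoint[OF d e] y'x' D(5) by auto
  have "dumbbell_graph (set d \<union> set e \<union> set c) (cycle_edges d \<union> cycle_edges e \<union> path_edges (x' # c @ [y']))"
    by (rule dumbbell_of_cycles_and_path) (use C D Ee disj in \<open>auto simp: is_cycle_def\<close>)
  moreover have cne: "c \<noteq> []" using C(2) by auto
  then have "path_edges (x' # c @ [y']) = insert {x, x'} (insert {y, y'} (path_edges c))"
    using path_edges_Cons[of "c @ [y']" x'] path_edges_snoc[OF cne, of y'] C(3,4)
    by (simp add: insert_commute)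
  then have "cycle_edges d \<union> cycle_edges e \<union> path_edges (x' # c @ [y'])
      = path_edges c \<union> cycle_edges d \<union> cycle_edges e \<union> {{x, x'}, {y, y'}}"
    by auto
  moreover have "set d \<union> set e \<union> set c = set c \<union> set d \<union> set e" by auto
  ultimately have "dumbbell_graph (set c \<union> set d \<union> set e)
      (path_edges c \<union> cycle_edges d \<union> cycle_edges e \<union> {{x, x'}, {y, y'}})"
    by simp
  moreover have "swap_verts x x' y' = set c \<union> set d \<union> set e"
    using C(5) D(5) Ee(5) unfolding swap_verts_def by auto
  moreover have "swap_edges x y x' y' = path_edges c \<union> cycle_edges d \<union> cycle_edges e \<union> {{x, x'}, {y, y'}}"
  proof -
    have "{x, y} \<notin> cycle_edges d" "{x, y} \<notin> cycle_edges e"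
      using cycle_edges_subset[of "{x, y}"] C(8) disj by blast+
    then show ?thesis
      unfolding swap_edges_def C(6) D(7) Ee(7) using C(9) f by (auto simp: doubleton_eq_iff)
  qed
  ultimately show ?thesis unfolding theta_or_dumbbell_def by simp
qed

end


lemma swap_symmetric:
  assumes "y \<in> reach A x"
  shows "swap_verts y y' x' = swap_verts x x' y'" "swap_edges y x y' x' = swap_edges x y x' y'"
  using reach_eq[OF assms] comp_edges_eq[OF assms]
  unfolding swap_verts_def swap_edges_def by (auto simp: insert_commute)

lemma swap_shape:
  assumes x: "x \<in> V" and xy: "{x, y} \<in> A" and xx': "{x, x'} \<in> E" "{x, x'} \<notin> A"
    and yy': "{y, y'} \<in> E" "{y, y'} \<notin> A"
  shows "theta_or_dumbbell (swap_verts x x' y') (swap_edges x y x' y')"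
proof -
  obtain c where c: "component_cycle A x y c" using component_cycle_exists[OF x xy] by blast
  note C = component_cycleD[OF c]
  note f = swap_vertices_distinct[OF x xy xx' yy']
  consider (x'_in) "x' \<in> set c" | (y'_in) "x' \<notin> set c" "y' \<in> set c"
    | (none) "x' \<notin> set c" "y' \<notin> set c" by blast
  then show ?thesis
  proof cases
    case x'_in
    then obtain xs ys where s: "c = x # xs @ x' # ys" "xs \<noteq> []"
      using component_cycle_split[OF c _ f(4,7) xx'(2)] by blast
    consider (forward) "y' \<in> set ys" | (backward) "y' \<in> set (x # xs)" | (outside) "y' \<notin> set c"
      using s(1) f(9) by auto
    then show ?thesis
    proof cases
      case forward
      then obtain ms ys' where "ys = ms @ y' # ys'" using split_list by metis
      then show ?thesis using swap_shape_forward[OF x xy xx' yy' c _ s(2)] s(1) by simp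
    next
      case backward
      then obtain xs' ms where "x # xs = xs' @ y' # ms" using split_list by metis
      then have "c = xs' @ y' # ms @ x' # ys" using s(1) by simp
      then show ?thesis by (rule swap_shape_backward[OF x xy xx' yy' c])
    next
      case outside
      then show ?thesis using swap_shape_one_outside[OF x xy xx' yy' c s] by simp
    qed
  next
    case y'_in
    text \<open>Symmetric to the previous case, with the roles of \<open>x\<close> and \<open>y\<close> exchanged.\<close>
    have yx: "{y, x} \<in> A" using xy by (simp add: insert_commute)
    have yr: "y \<in> reach A x" using reach_step[OF reach_self xy] .
    obtain c' where c': "component_cycle A y x c'" using component_cycle_exists[OF f(3) yx] by blast
    have "set c' = set c" using component_cycleD(5)[OF c'] C(5) reach_eq[OF yr] by simp
    then have "y' \<in> set c'" "x' \<notin> set c'" using y'_in by auto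
    moreover obtain ys xs where "c' = y # ys @ y' # xs" "ys \<noteq> []"
      using component_cycle_split[OF c' \<open>y' \<in> set c'\<close> f(5,8) yy'(2)] by blast
    ultimately have "theta_or_dumbbell (swap_verts y y' x') (swap_edges y x y' x')"
      using swap_shape_one_outside[OF f(3) yx yy' xx' c'] by simp
    then show ?thesis using swap_symmetric[OF yr] by simp
  next
    case none
    then show ?thesis
      using swap_shape_common_outside[OF x xy xx' yy' c] swap_shape_two_outside[OF x xy xx' yy' c]
      by blast
  qed
qed

lemma swap_component_shape:
  assumes x: "x \<in> V" and xy: "{x, y} \<in> A" and xx': "{x, x'} \<in> E" "{x, x'} \<notin> A"
    and yy': "{y, y'} \<in> E" "{y, y'} \<notin> A" and w: "w \<in> swap_verts x x' y'"
  shows "theta_or_dumbbell (comp_verts (insert {y, y'} (insert {x, x'} A) - {{x, y}}) w)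
           (comp_edges (insert {y, y'} (insert {x, x'} A) - {{x, y}}) w)"
proof -
  have B: "insert {y, y'} (insert {x, x'} A) - {{x, y}} = (A \<union> {{x, x'}, {y, y'}}) - {{x, y}}" by auto
  have "y \<in> reach A x" using reach_step[OF reach_self xy] .
  then have Add: "\<forall>e\<in>{{x, x'}, {y, y'}}. e \<subseteq> swap_verts x x' y'"
    unfolding swap_verts_def using reach_self by fastforce
  show ?thesis unfolding B
    by (rule modified_component_shape[where S = theta_or_dumbbell and X = "{x, x', y'}",
          OF swap_shape[OF x xy xx' yy'] conn_theta_or_dumbbell Add])
      (use w in \<open>auto simp: swap_verts_def swap_edges_def\<close>)
qed


lemma cycle_state: "x \<in> V \<Longrightarrow> (A, x, x) \<in> cls_E V E"
proof -
  assume x: "x \<in> V"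
  obtain y c where c: "component_cycle A x y c" using component_cycle_of_vertex[OF x] by blast
  note C = component_cycleD[OF c]
  have "bdry V A = {}" unfolding bdry_def using deg_A by auto
  then have "(A, x, x) \<in> states V E"
    unfolding states_def using A_subset_E x deg_A by auto
  moreover have "cycle_graph (comp_verts A x) (comp_edges A x)"
    unfolding cycle_graph_def comp_verts_def using C(1,2,5,7) by (auto simp: is_cycle_def)
  ultimately show ?thesis unfolding cls_E_def by simp
qed

lemma theta_dumbbell_state:
  assumes st: "(B, u, v) \<in> states V E" and BE: "B \<subseteq> E"
    and shape: "theta_or_dumbbell (comp_verts B u) (comp_edges B u)"
    and d2: "\<forall>w\<in>V. deg B w \<ge> 2" and d3: "deg B u \<ge> 3"
  shows "(B, u, v) \<in> cls_Theta V E \<union> cls_D V E" "(B, u, v) \<notin> cls_E V E \<union> cls_T V E"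
proof -
  have u: "u \<in> V" using st unfolding states_def by simp
  have "\<not> cycle_graph (comp_verts B u) (comp_edges B u) \<and> \<not> tadpole_graph (comp_verts B u) (comp_edges B u)"
    by (rule not_cycle_nor_tadpole[OF edges_are_pairs[OF BE] _ reach_self d3])
      (use d2 component_in_V[OF BE u] in blast)
  then show "(B, u, v) \<notin> cls_E V E \<union> cls_T V E" unfolding cls_E_def cls_T_def by auto
  show "(B, u, v) \<in> cls_Theta V E \<union> cls_D V E"
    using shape st unfolding theta_or_dumbbell_def cls_Theta_def cls_D_def by auto
qed

lemma added_edge_state:
  assumes x: "x \<in> V" and xz: "{x, z} \<in> E" "{x, z} \<notin> A"
  shows "(insert {x, z} A, z, x) \<in> cls_Theta V E \<union> cls_D V E"
    "(insert {x, z} A, z, x) \<notin> cls_E V E \<union> cls_T V E"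
proof -
  have z: "z \<in> V" "z \<noteq> x" using edge_ends[OF xz(1)] by auto
  let ?B = "insert {x, z} A"
  have BE: "?B \<subseteq> E" using A_subset_E xz by auto
  have dg: "deg ?B w = 2 + (if w \<in> {x, z} then 1 else 0)" if "w \<in> V" for w
    using deg_insert[OF finite_A xz(2), of w] deg_A[OF that] by simp
  have st: "(?B, z, x) \<in> states V E"
    by (rule state_with_two_defects[OF BE z(1) x z(2)]) (use dg z x in auto)
  show "(?B, z, x) \<in> cls_Theta V E \<union> cls_D V E" "(?B, z, x) \<notin> cls_E V E \<union> cls_T V E"
    using theta_dumbbell_state[OF st BE added_edge_shape[OF x xz]] dg z by auto
qed

lemma swapped_edge_state:
  assumes x: "x \<in> V" and xy: "{x, y} \<in> A" and xx': "{x, x'} \<in> E" "{x, x'} \<notin> A"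
  shows "(insert {x, x'} A - {{x, y}}, x', y) \<in> cls_T V E"
    "(insert {x, x'} A - {{x, y}}, y, x') \<in> cls_T V E"
proof -
  have x': "x' \<in> V" "x' \<noteq> x" using edge_ends[OF xx'(1)] by auto
  have y: "y \<in> V" "y \<noteq> x" using A_edge_ends[OF xy] by auto
  have x'y: "x' \<noteq> y" using xy xx'(2) by auto
  let ?B = "insert {x, x'} A - {{x, y}}"
  have BE: "?B \<subseteq> E" using A_subset_E xx' by auto
  have dg: "deg ?B w = 2 + (if w \<in> {x, x'} then 1 else 0) - (if w \<in> {x, y} then 1 else 0)"
    if "w \<in> V" for w
    using deg_remove[of "insert {x, x'} A" "{x, y}" w] deg_insert[OF finite_A xx'(2), of w]
      deg_A[OF that] finite_A xy by simp
  have d2: "\<forall>w\<in>V. w \<noteq> x' \<and> w \<noteq> y \<longrightarrow> deg ?B w = 2" using dg by auto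
  have "deg ?B x' = 3" "deg ?B y = 1" using dg x' y x'y by auto
  then have "(?B, x', y) \<in> states V E" "(?B, y, x') \<in> states V E"
    using state_with_two_defects[OF BE x'(1) y(1) x'y d2] state_with_two_defects[OF BE y(1) x'(1) _ _]
      x'y d2 by auto
  moreover have "tadpole_graph (comp_verts ?B x') (comp_edges ?B x')"
    "tadpole_graph (comp_verts ?B y) (comp_edges ?B y)"
    using swapped_edge_shape[OF x xy xx', of x'] swapped_edge_shape[OF x xy xx', of y]
      reach_self[of x' A] reach_step[OF reach_self xy] by auto
  ultimately show "(?B, x', y) \<in> cls_T V E" "(?B, y, x') \<in> cls_T V E"
    unfolding cls_T_def by auto
qed

lemma double_swap_state:
  assumes x: "x \<in> V" and xy: "{x, y} \<in> A" and xx': "{x, x'} \<in> E" "{x, x'} \<notin> A"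
    and yy': "{y, y'} \<in> E" "{y, y'} \<notin> A"
  shows "(insert {y, y'} (insert {x, x'} A) - {{x, y}}, x', y') \<in> cls_Theta V E \<union> cls_D V E"
    "(insert {y, y'} (insert {x, x'} A) - {{x, y}}, x', y') \<notin> cls_E V E \<union> cls_T V E"
proof -
  note f = swap_vertices_distinct[OF x xy xx' yy']
  let ?B = "insert {y, y'} (insert {x, x'} A) - {{x, y}}"
  have BE: "?B \<subseteq> E" using A_subset_E xx' yy' by auto
  have new: "{y, y'} \<notin> insert {x, x'} A" using yy'(2) f by (auto simp: doubleton_eq_iff)
  have dg: "deg ?B w = 2 + (if w \<in> {x, x'} then 1 else 0) + (if w \<in> {y, y'} then 1 else 0)
      - (if w \<in> {x, y} then 1 else 0)" if "w \<in> V" for w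
    using deg_remove[of "insert {y, y'} (insert {x, x'} A)" "{x, y}" w]
      deg_insert[of "insert {x, x'} A", OF _ new, of w] deg_insert[OF finite_A xx'(2), of w]
      deg_A[OF that] finite_A xy by simp
  have d2: "\<forall>w\<in>V. w \<noteq> x' \<and> w \<noteq> y' \<longrightarrow> deg ?B w = 2" using dg f by auto
  have "deg ?B x' = 3" "deg ?B y' = 3" using dg f by auto
  then have st: "(?B, x', y') \<in> states V E"
    using state_with_two_defects[OF BE f(1,2,9) d2] by auto
  have "\<forall>w\<in>V. deg ?B w \<ge> 2" using dg f by auto
  moreover have "deg ?B x' \<ge> 3" using \<open>deg ?B x' = 3\<close> by simp
  moreover have "theta_or_dumbbell (comp_verts ?B x') (comp_edges ?B x')"
    by (rule swap_component_shape[OF x xy xx' yy']) (simp add: swap_verts_def reach_self)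
  ultimately show "(?B, x', y') \<in> cls_Theta V E \<union> cls_D V E" "(?B, x', y') \<notin> cls_E V E \<union> cls_T V E"
    using theta_dumbbell_state[OF st BE] by auto
qed


subsection \<open>Routes between the 2-factor states\<close>

text \<open>Across a non-A edge: add it, then walk the second defect back over it.\<close>
lemma route_non_A_edge:
  assumes n: "n > 0" and x: "x \<in> V" and xz: "{x, z} \<in> E" "{x, z} \<notin> A"
  shows "reaches V E n (A, x, x) (A, z, z)"
proof -
  have z: "z \<in> V" using edge_ends[OF xz(1)] by simp
  have "reaches V E n (A, x, x) (insert {x, z} A, z, x)"
    using reaches_add_u[OF finite_V n z xz] cycle_state[OF x] by blast
  also have "reaches V E n \<dots> (insert {x, z} A - {{x, z}}, z, z)"
    by (rule reaches_remove_v[OF finite_V n z xz(1) _ added_edge_state(2,1)[OF x xz]]) simp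
  also have "insert {x, z} A - {{x, z}} = A" using xz(2) by auto
  finally show ?thesis .
qed

text \<open>Across an A-edge \<open>{x, y}\<close>, using the non-A edges \<open>{x, x'}\<close> and \<open>{y, y'}\<close>: six moves
  through a theta/dumbbell, a tadpole, a theta/dumbbell, a tadpole and a theta/dumbbell state.\<close>
lemma route_A_edge:
  assumes n: "n > 0" and x: "x \<in> V" and xy: "{x, y} \<in> A"
  shows "reaches V E n (A, x, x) (A, y, y)"
proof -
  have y: "y \<in> V" using A_edge_ends[OF xy] by simp
  obtain x' where xx': "{x, x'} \<in> E" "{x, x'} \<notin> A" using non_A_edge_exists[OF x] by blast
  obtain y' where yy': "{y, y'} \<in> E" "{y, y'} \<notin> A" using non_A_edge_exists[OF y] by blast
  note f = swap_vertices_distinct[OF x xy xx' yy']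
  have xyE: "{x, y} \<in> E" and yx: "{y, x} \<in> A" using xy A_subset_E by (auto simp: insert_commute)
  have x'x: "{x', x} \<in> E" "{x', x} \<notin> A" and y'y: "{y', y} \<in> E" "{y', y} \<notin> A"
    using xx' yy' by (simp_all add: insert_commute)
  note step_facts = finite_V n
  have "reaches V E n (A, x, x) (insert {x, x'} A, x', x)"
    using reaches_add_u[OF step_facts f(1) xx'] cycle_state[OF x] by blast
  also have "reaches V E n \<dots> (insert {x, x'} A - {{x, y}}, x', y)"
    by (rule reaches_remove_v[OF step_facts y xyE _ added_edge_state(2,1)[OF x xx']]) (simp add: xy)
  also have "reaches V E n \<dots> (insert {y, y'} (insert {x, x'} A - {{x, y}}), x', y')"
    by (rule reaches_add_v[OF step_facts f(2) yy'(1)])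
      (use yy'(2) f swapped_edge_state(1)[OF x xy xx'] in \<open>auto simp: doubleton_eq_iff\<close>)
  also have "insert {y, y'} (insert {x, x'} A - {{x, y}}) = insert {y, y'} (insert {x, x'} A) - {{x, y}}"
    using f by (auto simp: doubleton_eq_iff)
  also have "reaches V E n (\<dots>, x', y') (insert {y, y'} (insert {x, x'} A) - {{x, y}} - {{x', x}}, x, y')"
    by (rule reaches_remove_u[OF step_facts x x'x(1) _ double_swap_state(2,1)[OF x xy xx' yy']])
      (use f in \<open>auto simp: doubleton_eq_iff\<close>)
  also have "insert {y, y'} (insert {x, x'} A) - {{x, y}} - {{x', x}} = insert {y, y'} A - {{y, x}}"
    using x'x(2) f by (auto simp: doubleton_eq_iff)
  also have "reaches V E n (\<dots>, x, y') (insert {x, y} (insert {y, y'} A - {{y, x}}), y, y')"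
    by (rule reaches_add_u[OF step_facts y xyE])
      (use swapped_edge_state(2)[OF y yx yy'] in \<open>auto simp: insert_commute\<close>)
  also have "insert {x, y} (insert {y, y'} A - {{y, x}}) = insert {y', y} A"
    using xy by (auto simp: insert_commute)
  also have "reaches V E n (\<dots>, y, y') (insert {y', y} A - {{y', y}}, y, y)"
    by (rule reaches_remove_v[OF step_facts y y'y(1) _ added_edge_state(2,1)[OF f(2) y'y]]) simp
  also have "insert {y', y} A - {{y', y}} = A" using y'y(2) by auto
  finally show ?thesis .
qed

lemma route_edge:
  assumes "n > 0" "{x, z} \<in> E"
  shows "reaches V E n (A, x, x) (A, z, z)"
  using route_A_edge route_non_A_edge assms edge_ends[OF assms(2)] by blast

lemma route_walk:
  assumes n: "n > 0" and walk: "(x, y) \<in> (adj E)\<^sup>*"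
  shows "reaches V E n (A, x, x) (A, y, y)"
  using walk
proof (induction rule: rtrancl_induct)
  case base
  then show ?case unfolding reaches_def by simp
next
  case (step y z)
  then have "{y, z} \<in> E" by (simp add: adj_def)
  then show ?case using reaches_trans[OF step.IH route_edge[OF n]] by simp
qed

end

theorem lemma2:
  fixes V :: "'a set" and E :: "'a set set" and n :: real
  assumes "finite V" and "simple_graph V E" and "connected_graph V E"
    and "bipartite V E" and "cubic V E" and "n > 0"
    and "A \<in> two_factors V E" and "x \<in> V" and "y \<in> V"
  shows "reaches V E n (A, x, x) (A, y, y) \<and> reaches V E n (A, y, y) (A, x, x)"
proof -
  interpret two_factor_of_cubic V E A
    using assms by unfold_locales
  have "(x, y) \<in> (adj E)\<^sup>*" "(y, x) \<in> (adj E)\<^sup>*"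
    using assms(3,8,9) unfolding connected_graph_def by auto
  then show ?thesis using route_walk[OF assms(6)] by blast
qed

end
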